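(* Let $m/n\in(0,1/2]$, $k\in\{0,\dots,m-1\}$ and $\gamma\in\{A,B\}$ (with $\gamma=B$ if $k=0$). An element $d=((N_r),\pi,(A,B,C))$ of $\mathcal D_n$ equals $d(P)$ for some $P\in\mathcal P(m/n,k,\gamma)$ if and only if: (a) for all $r>0$: (i) $\pi_1(r,s)=r+_nm$ for all $s$, and $\pi_2(r,s)$ is increasing in $s$; (ii) $\pi_2(r,0)=0$; (b) for $r=0$: (i) $0\in\gamma$; (ii) $\pi_1(0,0)=k$; (iii) if $c$ is the unique element of $C$ then $\pi(0,c)=(m,0)$; (iv) $\pi_1(0,s)\in\{k,\dots,m\}$ for all $s$ and is increasing in $s$; (v) if $s_1<s_2$, $\pi_1(0,s_1)=\pi_1(0,s_2)$ and $s_1\in B\cup C$, then $s_2\in B$; (vi) if $s_1<s_2$, $\pi_1(0,s_1)=\pi_1(0,s_2)$ and $s_1,s_2\in A$ (resp. $s_1,s_2\in B$), then $\pi_2(0,s_1)>\pi_2(0,s_2)$ (resp. $\pi_2(0,s_1)<\pi_2(0,s_2)$).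
   Context: For $n\ge2$, $\Gamma_n$ is an $n$-star with edges $e_0,\dots,e_{n-1}$ (initial points of valence 1, final points meeting at a central vertex $v$, cyclically ordered by index). For $m/n\in(0,1/2]$ in lowest terms, $f_{m/n}\colon\Gamma_n\to\Gamma_n$ has $f_{m/n}(e_0)=e_0\bar e_1e_1\cdots\bar e_me_m$ and $f_{m/n}(e_r)=e_{r+_nm}$ for $r\ne0$, expanding uniformly away from preimages of vertices. A $\ast$-orbit is a periodic orbit $P$ of $f_{m/n}$ with $P\ne\{v\}$, $P\cap e_r\ne\emptyset$ for all $r$, $f_{m/n}(P\cap e_0)\not\subseteq e_m$, and $f_{m/n}(p_r)=p_{r+_nm}$ for all $r\ne0$, where $p_r$ is the point of $P\cap e_r$ closest to the initial point of $e_r$. The span $\Gamma_n^P$ is the smallest connected set containing $P$; the truncation is $f^P_{m/n}=r_P\circ f_{m/n}\colon\Gamma^P_n\to\Gamma^P_n$ where $r_P$ is the identity on $\Gamma^P_n$ and sends $x\notin\Gamma^P_n$ to the endpoint of $\Gamma^P_n$ on the edge containing $x$. $\mathcal D_n$ is the set of triples $((N_0,\dots,N_{n-1}),\pi,(A,B,C))$ with each $N_r$ a positive integer, $\pi$ a cyclic permutation of $\mathcal L=\{(r,s)\colon0\le r<n,\,0\le s<N_r\}$, and $(A,B,C)$ a partition of $\{0,\dots,N_0-1\}$ with $\#C=1$. For a $\ast$-orbit $P$, its data $d(P)$ is given by $N_r=\#(P\cap e_r)$; the points of $P\cap e_r$ are labelled $(r,0),\dots,(r,N_r-1)$ from the initial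 to the final point of $e_r$, and $\pi=f_{m/n}|_P$ in this labelling; $s\in A$, $B$ or $C$ according as $f^P_{m/n}$ is locally orientation-reversing, locally orientation-preserving, or not locally injective at $(0,s)$. $\mathcal P(m/n,k,\gamma)$ is the set of $\ast$-orbits with $f_{m/n}((0,0))\in e_k$ and $0\in\gamma$. Write $\tau_1,\tau_2$ for the projections of $\mathcal L$ to the first and second coordinates, $\pi_1=\tau_1\circ\pi$, $\pi_2=\tau_2\circ\pi$. *)

theory Defs
  imports Complex_Main "HOL-Combinatorics.Permutations"
begin

(* Points of the n-star Gamma_n: the central vertex v, or a point of edge e_r
   with parameter t in [0,1) (t = 0 the initial valence-one point, t -> 1 towards v). *)
datatype gpt = Vtx | Pt nat real

definition gamma :: "nat \<Rightarrow> gpt set" where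
  "gamma n = insert Vtx {Pt r t | r t. r < n \<and> 0 \<le> t \<and> t < 1}"

definition mkpt :: "nat \<Rightarrow> real \<Rightarrow> gpt" where
  "mkpt r t = (if 1 \<le> t then Vtx else Pt r t)"

(* f_{m/n}: e_0 is cut into 2m+1 equal subintervals, mapped linearly onto
   e_0, \bar e_1, e_1, ..., \bar e_m, e_m; e_r (r>0) is mapped onto e_{r+m mod n}. *)
fun fmap :: "nat \<Rightarrow> nat \<Rightarrow> gpt \<Rightarrow> gpt" where
  "fmap m n Vtx = Vtx"
| "fmap m n (Pt r t) =
     (if r \<noteq> 0 then Pt ((r + m) mod n) t
      else (let s = real (2*m+1) * t; j = nat \<lfloor>s\<rfloor>; u = s - real j in
            if j = 0 then mkpt 0 u
            else if odd j then mkpt ((j+1) div 2) (1 - u)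
            else Pt (j div 2) u))"

definition periodic_orbit :: "nat \<Rightarrow> nat \<Rightarrow> gpt set \<Rightarrow> bool" where
  "periodic_orbit m n P \<longleftrightarrow>
     (\<exists>x\<in>gamma n. \<exists>p>0. (fmap m n ^^ p) x = x \<and> P = {(fmap m n ^^ k) x | k. True})"

definition ptsE :: "gpt set \<Rightarrow> nat \<Rightarrow> real set" where
  "ptsE P r = {t. Pt r t \<in> P}"

definition tmin :: "gpt set \<Rightarrow> nat \<Rightarrow> real" where
  "tmin P r = Min (ptsE P r)"

definition star_orbit :: "nat \<Rightarrow> nat \<Rightarrow> gpt set \<Rightarrow> bool" where
  "star_orbit m n P \<longleftrightarrow>
     periodic_orbit m n P \<and> P \<noteq> {Vtx} \<and>
     (\<forall>r<n. ptsE P r \<noteq> {}) \<and>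
     \<not> (fmap m n ` (P \<inter> {Pt 0 t | t. True}) \<subseteq> {Pt m t | t. True}) \<and>
     (\<forall>r. 0 < r \<and> r < n \<longrightarrow>
        fmap m n (Pt r (tmin P r)) = Pt ((r + m) mod n) (tmin P ((r + m) mod n)))"

(* labelling: (r,s) is the s-th point of P \<inter> e_r from the initial point *)
definition lab :: "gpt set \<Rightarrow> nat \<Rightarrow> nat \<Rightarrow> gpt" where
  "lab P r s = Pt r (sorted_list_of_set (ptsE P r) ! s)"

fun idx :: "gpt set \<Rightarrow> gpt \<Rightarrow> nat \<times> nat" where
  "idx P (Pt r t) = (r, card {t' \<in> ptsE P r. t' < t})"
| "idx P Vtx = undefined"

definition Lset :: "nat list \<Rightarrow> (nat \<times> nat) set" where
  "Lset N = {(r, s). r < length N \<and> s < N ! r}"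

definition dataN :: "nat \<Rightarrow> gpt set \<Rightarrow> nat list" where
  "dataN n P = map (\<lambda>r. card (ptsE P r)) [0..<n]"

(* pi = f|_P in the labelling, extended by the identity outside L *)
definition dataPi :: "nat \<Rightarrow> nat \<Rightarrow> gpt set \<Rightarrow> nat \<times> nat \<Rightarrow> nat \<times> nat" where
  "dataPi m n P = (\<lambda>(r, s). if (r, s) \<in> Lset (dataN n P)
                            then idx P (fmap m n (lab P r s)) else (r, s))"

(* span of P (smallest connected subset of the star containing P) *)
definition spanP :: "nat \<Rightarrow> gpt set \<Rightarrow> gpt set" where
  "spanP n P = insert Vtx {Pt r t | r t. r < n \<and> tmin P r \<le> t \<and> t < 1}"

definition retr :: "nat \<Rightarrow> gpt set \<Rightarrow> gpt \<Rightarrow> gpt" where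
  "retr n P x = (if x \<in> spanP n P then x
                 else (case x of Pt r t \<Rightarrow> Pt r (tmin P r) | Vtx \<Rightarrow> Vtx))"

definition fP :: "nat \<Rightarrow> nat \<Rightarrow> gpt set \<Rightarrow> gpt \<Rightarrow> gpt" where
  "fP m n P = retr n P \<circ> fmap m n"

definition nbhd :: "gpt set \<Rightarrow> real \<Rightarrow> real \<Rightarrow> real set" where
  "nbhd P t0 e = {t. tmin P 0 \<le> t \<and> t < 1 \<and> \<bar>t - t0\<bar> < e}"

definition loc_inj :: "nat \<Rightarrow> nat \<Rightarrow> gpt set \<Rightarrow> real \<Rightarrow> bool" where
  "loc_inj m n P t0 \<longleftrightarrow>
     (\<exists>e>0. inj_on (fP m n P) ((\<lambda>t. Pt 0 t) ` nbhd P t0 e))"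

definition loc_pres :: "nat \<Rightarrow> nat \<Rightarrow> gpt set \<Rightarrow> real \<Rightarrow> bool" where
  "loc_pres m n P t0 \<longleftrightarrow>
     (\<exists>e>0. \<exists>j. \<forall>t1\<in>nbhd P t0 e. \<forall>t2\<in>nbhd P t0 e. t1 < t2 \<longrightarrow>
        (\<exists>u1 u2. fP m n P (Pt 0 t1) = Pt j u1 \<and> fP m n P (Pt 0 t2) = Pt j u2 \<and> u1 < u2))"

definition loc_rev :: "nat \<Rightarrow> nat \<Rightarrow> gpt set \<Rightarrow> real \<Rightarrow> bool" where
  "loc_rev m n P t0 \<longleftrightarrow>
     (\<exists>e>0. \<exists>j. \<forall>t1\<in>nbhd P t0 e. \<forall>t2\<in>nbhd P t0 e. t1 < t2 \<longrightarrow>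
        (\<exists>u1 u2. fP m n P (Pt 0 t1) = Pt j u1 \<and> fP m n P (Pt 0 t2) = Pt j u2 \<and> u1 > u2))"

definition dataABC :: "nat \<Rightarrow> nat \<Rightarrow> gpt set \<Rightarrow> nat set \<times> nat set \<times> nat set" where
  "dataABC m n P =
     (let tt = (\<lambda>s. sorted_list_of_set (ptsE P 0) ! s); N0 = card (ptsE P 0) in
      ({s. s < N0 \<and> loc_rev m n P (tt s)},
       {s. s < N0 \<and> loc_pres m n P (tt s)},
       {s. s < N0 \<and> \<not> loc_inj m n P (tt s)}))"

definition dataP :: "nat \<Rightarrow> nat \<Rightarrow> gpt set \<Rightarrow>
    nat list \<times> (nat \<times> nat \<Rightarrow> nat \<times> nat) \<times> (nat set \<times> nat set \<times> nat set)" where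
  "dataP m n P = (dataN n P, dataPi m n P, dataABC m n P)"

definition inD :: "nat \<Rightarrow> nat list \<times> (nat \<times> nat \<Rightarrow> nat \<times> nat) \<times> (nat set \<times> nat set \<times> nat set) \<Rightarrow> bool" where
  "inD n d = (case d of (N, \<pi>, (A, B, C)) \<Rightarrow>
     length N = n \<and> (\<forall>r<n. 0 < N ! r) \<and>
     \<pi> permutes Lset N \<and> (\<forall>x\<in>Lset N. \<forall>y\<in>Lset N. \<exists>k. (\<pi> ^^ k) x = y) \<and>
     A \<union> B \<union> C = {..<N ! 0} \<and> A \<inter> B = {} \<and> A \<inter> C = {} \<and> B \<inter> C = {} \<and>
     card C = 1)"

(* gamma is encoded by a boolean: gB = True means gamma = B, otherwise gamma = A *)
definition Pset :: "nat \<Rightarrow> nat \<Rightarrow> nat \<Rightarrow> bool \<Rightarrow> gpt set \<Rightarrow> bool" where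
  "Pset m n k gB P \<longleftrightarrow> star_orbit m n P \<and> (\<exists>t. fmap m n (lab P 0 0) = Pt k t) \<and>
     0 \<in> (if gB then fst (snd (dataABC m n P)) else fst (dataABC m n P))"

end

theory Submission
  imports Defs
begin

(* A \<ast>-orbit avoids the initial points of the edges (by coprimality an initial
   point would propagate to the fixed point at the initial point of e_0) and hence also the
   breakpoints j/(2m+1) of f on e_0.  So near each point of P on e_0 the truncation f^P is the
   affine lap of f containing it, orientation-preserving on even and reversing on odd laps,
   unless the image is the first point of P on its edge; this can only happen on e_m, and there
   the retraction folds the lap.  The conditions are then read off from the orders of the
   images.

   The data determine on which lap each point of e_0 lies, and the positions are
   obtained as the fixed point of the map pulling positions back along the inverse laps of f:
   it contracts by 2m+1 on e_0 and every cycle of pi passes through e_0.  The resulting points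
   realize the data once they are distinct.  Labels whose points coincide form classes of a
   common odd size, which pi permutes preserving or reversing their order; if that size
   exceeded 1, the middle elements of the classes would form a pi-invariant set missing (0, 0),
   contradicting cyclicity. *)

lemma funpow_closed: "(\<And>x. x \<in> S \<Longrightarrow> f x \<in> S) \<Longrightarrow> x \<in> S \<Longrightarrow> (f ^^ k) x \<in> S"
  by (induction k) auto

text \<open>Rotation by \<open>m\<close> modulo \<open>n\<close> acts transitively when \<open>m\<close> and \<open>n\<close> are coprime, so a
  property of edges propagating along \<open>r \<mapsto> r + m\<close> away from \<open>e\<^sub>0\<close> reaches \<open>e\<^sub>0\<close>.\<close>

lemma coprime_shift_reaches_0:
  fixes m n r :: nat and S :: "nat set"
  assumes "0 < m" "coprime m n" "r \<in> S" "r < n"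
    and shift: "\<And>r. r \<in> S \<Longrightarrow> 0 < r \<Longrightarrow> r < n \<Longrightarrow> (r + m) mod n \<in> S"
  shows "0 \<in> S"
proof -
  obtain x y where "m * x = n * y + gcd m n" using bezout_nat[of m n] assms(1) by auto
  then have xy: "m * x = n * y + 1" using assms(2) by simp
  have iter: "(r + i*m) mod n \<in> S \<or> 0 \<in> S" for i
  proof (induction i)
    case 0 then show ?case using assms by simp
  next
    case (Suc i)
    show ?case
    proof (cases "0 \<in> S")
      case False
      then have ri: "(r + i*m) mod n \<in> S" "0 < (r + i*m) mod n" using Suc by (auto intro: gr0I)
      have "((r + i*m) mod n + m) mod n \<in> S" using shift[OF ri] assms(4) by simp
      moreover have "((r + i*m) mod n + m) mod n = (r + Suc i * m) mod n"
        by (metis mod_add_left_eq add.assoc mult_Suc add.commute)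
      ultimately show ?thesis by simp
    qed simp
  qed
  obtain d where d: "n = r + d" using assms(4) by (metis less_imp_add_positive)
  have "r + (x*(n-r))*m = r + (n-r)*(m*x)" by (simp add: algebra_simps)
  also have "\<dots> = n * (1 + (n-r)*y)" unfolding xy d by (simp add: algebra_simps)
  finally have "(r + (x*(n-r))*m) mod n = 0" by simp
  then show ?thesis using iter[of "x*(n-r)"] by auto
qed

lemma card_less_sorted_nth:
  fixes T :: "'a::linorder set"
  assumes "finite T" "s < card T"
  shows "card {t' \<in> T. t' < sorted_list_of_set T ! s} = s"
proof -
  let ?xs = "sorted_list_of_set T"
  have set_xs: "set ?xs = T" and len: "length ?xs = card T" using assms(1) by simp_all
  have "sorted_wrt (<) ?xs" using assms(1) by simp
  then have less: "i < j \<Longrightarrow> j < card T \<Longrightarrow> ?xs ! i < ?xs ! j" for i j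
    using len by (simp add: sorted_wrt_iff_nth_less)
  have "{t' \<in> T. t' < ?xs ! s} = (\<lambda>i. ?xs ! i) ` {..<s}"
  proof (intro equalityI subsetI)
    fix t assume "t \<in> {t' \<in> T. t' < ?xs ! s}"
    then obtain i where i: "i < card T" "?xs ! i = t" "t < ?xs ! s"
      using set_xs len by (metis (mono_tags, lifting) in_set_conv_nth mem_Collect_eq)
    then have "i < s" using less[of s i] by (metis linorder_neqE_nat order_less_asym order_less_irrefl)
    then show "t \<in> (\<lambda>i. ?xs ! i) ` {..<s}" using i by auto
  qed (use less assms(2) set_xs len in \<open>auto intro: nth_mem\<close>)
  moreover have "inj_on (\<lambda>i. ?xs ! i) {..<s}"
    using less assms(2) by (auto simp: inj_on_def) (metis less_trans linorder_neqE_nat order_less_irrefl)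
  ultimately show ?thesis by (simp add: card_image)
qed

lemma sorted_list_of_set_strict_mono_image:
  fixes f :: "nat \<Rightarrow> 'a::linorder"
  assumes "\<And>i j. i < j \<Longrightarrow> j < N \<Longrightarrow> f i < f j"
  shows "sorted_list_of_set (f ` {..<N}) = map f [0..<N]" and "card (f ` {..<N}) = N"
proof -
  have "inj_on f {..<N}"
    using assms by (auto simp: inj_on_def) (metis linorder_neqE_nat order_less_irrefl)
  then show c: "card (f ` {..<N}) = N" by (simp add: card_image)
  have "sorted_wrt (<) (map f [0..<N])"
    using assms by (auto simp: sorted_wrt_iff_nth_less)
  then show "sorted_list_of_set (f ` {..<N}) = map f [0..<N]"
    using sorted_list_of_set_unique[of "f ` {..<N}" "map f [0..<N]"] c by auto
qed

lemma convergent_if_geometric_steps: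
  fixes y :: "nat \<Rightarrow> real"
  assumes q: "0 \<le> q" "q < 1" and steps: "\<And>j. \<bar>y (Suc j) - y j\<bar> \<le> K * q ^ j"
  shows "convergent y"
proof -
  have "summable (\<lambda>j. K * q ^ j)" using q by (intro summable_mult summable_geometric) simp
  then have "summable (\<lambda>j. y (Suc j) - y j)"
    by (rule summable_comparison_test'[of _ 0]) (use steps in simp)
  then have "(\<lambda>j. \<Sum>i<j. y (Suc i) - y i) \<longlonglongrightarrow> (\<Sum>j. y (Suc j) - y j)"
    by (rule summable_LIMSEQ)
  then have "(\<lambda>j. y j - y 0 + y 0) \<longlonglongrightarrow> (\<Sum>j. y (Suc j) - y j) + y 0"
    by (intro tendsto_add) (simp_all add: sum_lessThan_telescope)
  then show ?thesis unfolding convergent_def by auto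
qed

section \<open>Laps of \<open>f\<close> on \<open>e\<^sub>0\<close>\<close>

text \<open>The edge \<open>e\<^sub>0\<close> is cut into \<open>2m+1\<close> laps; \<open>f\<close> maps the lap \<open>J\<close> affinely onto the
  edge \<open>lap_edge J\<close>, preserving the orientation iff \<open>J\<close> is even.\<close>

definition lap_of :: "nat \<Rightarrow> real \<Rightarrow> nat" where
  "lap_of m t = nat \<lfloor>real (2*m+1) * t\<rfloor>"

definition lap_edge :: "nat \<Rightarrow> nat" where
  "lap_edge J = (J + 1) div 2"

definition lap :: "nat \<Rightarrow> nat \<Rightarrow> real \<Rightarrow> real" where
  "lap m J t = (if even J then real (2*m+1) * t - real J else real J + 1 - real (2*m+1) * t)"

definition lap_inv :: "nat \<Rightarrow> nat \<Rightarrow> real \<Rightarrow> real" where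
  "lap_inv m J y = (if even J then (y + real J) / real (2*m+1) else (real J + 1 - y) / real (2*m+1))"

lemma lap_lap_inv [simp]: "lap m J (lap_inv m J y) = y"
  by (simp add: lap_def lap_inv_def)

lemma lap_strict_mono: "even J \<Longrightarrow> t1 < t2 \<Longrightarrow> lap m J t1 < lap m J t2"
  and lap_strict_antimono: "odd J \<Longrightarrow> t1 < t2 \<Longrightarrow> lap m J t2 < lap m J t1"
  by (simp_all add: lap_def)

lemma lap_diff: "lap m J t - lap m J t' = (if even J then 1 else -1) * real (2*m+1) * (t - t')"
  by (simp add: lap_def algebra_simps)

lemma lap_inv_bounds:
  assumes "0 \<le> y" "y \<le> 1"
  shows "real J / real (2*m+1) \<le> lap_inv m J y" "lap_inv m J y \<le> (real J + 1) / real (2*m+1)"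
  using assms by (auto simp: lap_inv_def divide_right_mono)

lemma lap_inv_mono: "even J \<Longrightarrow> y1 \<le> y2 \<Longrightarrow> lap_inv m J y1 \<le> lap_inv m J y2"
  and lap_inv_antimono: "odd J \<Longrightarrow> y1 \<le> y2 \<Longrightarrow> lap_inv m J y2 \<le> lap_inv m J y1"
  by (simp_all add: lap_inv_def divide_right_mono)

lemma abs_lap_inv_diff: "\<bar>lap_inv m J a - lap_inv m J b\<bar> = \<bar>a - b\<bar> / real (2*m+1)"
proof -
  have "lap_inv m J a - lap_inv m J b = (if even J then a - b else b - a) / real (2*m+1)"
    by (simp add: lap_inv_def diff_divide_distrib[symmetric])
  then show ?thesis by (simp add: abs_minus_commute)
qed

lemma lap_edge_eq_even_le: "lap_edge a = lap_edge b \<Longrightarrow> a \<le> b \<Longrightarrow> even a \<Longrightarrow> a = b"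
  and lap_edge_eq_odd_le: "lap_edge a = lap_edge b \<Longrightarrow> a \<le> b \<Longrightarrow> odd b \<Longrightarrow> a = b"
  and lap_edge_eq_gt: "lap_edge a = lap_edge b \<Longrightarrow> b < a \<Longrightarrow> even a \<and> odd b"
  unfolding lap_edge_def by presburger+

lemma lap_edge_mono: "a \<le> b \<Longrightarrow> lap_edge a \<le> lap_edge b"
  unfolding lap_edge_def by (simp add: div_le_mono)

lemma lap_of_eq:
  assumes "real J \<le> real (2*m+1) * t" "real (2*m+1) * t < real J + 1"
  shows "lap_of m t = J"
  using assms by (simp add: lap_of_def floor_eq_iff nat_eq_iff)

lemma lap_of_mono: "a \<le> b \<Longrightarrow> lap_of m a \<le> lap_of m b"
  unfolding lap_of_def by (intro nat_mono floor_mono mult_left_mono) auto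

lemma lap_of_bounds:
  assumes "0 \<le> t"
  shows "real (lap_of m t) \<le> real (2*m+1) * t" "real (2*m+1) * t < real (lap_of m t) + 1"
proof -
  have "real (lap_of m t) = of_int \<lfloor>real (2*m+1) * t\<rfloor>"
    using assms by (simp add: lap_of_def)
  then show "real (lap_of m t) \<le> real (2*m+1) * t" "real (2*m+1) * t < real (lap_of m t) + 1"
    by linarith+
qed

lemma fmap_edge0_lap:
  assumes "0 \<le> t" "t < 1" "real J < real (2*m+1) * t" "real (2*m+1) * t < real J + 1"
  shows "fmap m n (Pt 0 t) = Pt (lap_edge J) (lap m J t)" "lap m J t < 1"
proof -
  have "lap_of m t = J" using assms by (intro lap_of_eq) auto
  then have "nat \<lfloor>real (2*m+1) * t\<rfloor> = J" by (simp add: lap_of_def)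
  then show "fmap m n (Pt 0 t) = Pt (lap_edge J) (lap m J t)"
    using assms by (auto simp: Let_def mkpt_def lap_def lap_edge_def elim!: oddE evenE)
  show "lap m J t < 1" using assms by (auto simp: lap_def)
qed

lemma fmap_mkpt_edge0_lap:
  assumes "real J \<le> real (2*m+1) * t" "real (2*m+1) * t \<le> real J + 1" "J \<le> 2*m" "0 \<le> t" "t \<le> 1"
  shows "fmap m n (mkpt 0 t) = mkpt (lap_edge J) (lap m J t)"
proof (cases "t = 1")
  case True
  then have "J = 2*m" using assms by simp
  then show ?thesis using True by (simp add: mkpt_def lap_def lap_edge_def)
next
  case False
  then have t1: "mkpt 0 t = Pt 0 t" "t < 1" using assms by (simp_all add: mkpt_def)
  show ?thesis
  proof (cases "real (2*m+1) * t = real J + 1")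
    case True
    then have "nat \<lfloor>real (2*m+1) * t\<rfloor> = J + 1"
      by (metis floor_of_nat nat_int of_nat_1 of_nat_add)
    then show ?thesis using True t1 by (auto simp: Let_def mkpt_def lap_def lap_edge_def elim!: oddE evenE)
  next
    case False
    then have "lap_of m t = J" using assms by (intro lap_of_eq) auto
    then have "nat \<lfloor>real (2*m+1) * t\<rfloor> = J" by (simp add: lap_of_def)
    then show ?thesis using t1 assms False
      by (auto simp: Let_def mkpt_def lap_def lap_edge_def elim!: oddE evenE)
  qed
qed

lemma fmap_edge0_breakpoint:
  assumes "real (2*m+1) * t = real J" "0 \<le> t" "t < 1" "J \<noteq> 0"
  shows "fmap m n (Pt 0 t) = (if odd J then Vtx else Pt (J div 2) 0)"
proof -
  have "nat \<lfloor>real (2*m+1) * t\<rfloor> = J" using assms(1) by simp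
  then show ?thesis using assms by (auto simp: Let_def mkpt_def)
qed

lemma fmap_in_gamma:
  assumes "x \<in> gamma n" "m < n"
  shows "fmap m n x \<in> gamma n"
proof (cases x)
  case Vtx then show ?thesis using assms by simp
next
  case (Pt r t)
  then have rt: "r < n" "0 \<le> t" "t < 1" using assms by (auto simp: gamma_def)
  show ?thesis
  proof (cases "r = 0")
    case False
    then show ?thesis using Pt rt by (auto simp: gamma_def)
  next
    case True
    define s where "s = real (2*m+1) * t"
    define j where "j = nat \<lfloor>s\<rfloor>"
    define u where "u = s - real j"
    have s0: "0 \<le> s" using rt by (simp add: s_def)
    have u: "0 \<le> u" "u < 1" using s0 by (simp_all add: u_def j_def) linarith+
    have "s < real (2*m+1)" using rt by (simp add: s_def)
    then have "j \<le> 2*m" using s0 by (simp add: j_def) linarith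
    then have jn: "(j+1) div 2 < n" "j div 2 < n" using assms(2) by linarith+
    have mk: "mkpt r' v \<in> gamma n" if "r' < n" "0 \<le> v" for r' v
      using that by (auto simp: mkpt_def gamma_def)
    have "fmap m n x = (if j = 0 then mkpt 0 u else if odd j then mkpt ((j+1) div 2) (1 - u)
            else Pt (j div 2) u)"
      using Pt True by (simp add: Let_def s_def j_def u_def)
    then show ?thesis using mk[of 0 u] mk[of "(j+1) div 2" "1 - u"] u jn assms(2)
      by (auto simp: gamma_def)
  qed
qed

lemma lap_decreases_nearby:
  fixes t0 a e :: real
  assumes i1: "real J < real (2*m+1) * t0" and i2: "real (2*m+1) * t0 < real J + 1"
    and J: "J \<le> 2*m" and a: "a < t0" and e: "0 < e"
  obtains t where "t \<noteq> t0" "a \<le> t" "t < 1" "\<bar>t - t0\<bar> < e"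
    "real J < real (2*m+1) * t" "real (2*m+1) * t < real J + 1" "lap m J t < lap m J t0"
proof -
  define M where "M = real (2*m+1)"
  have M: "1 \<le> M" by (simp add: M_def)
  have lo: "real J / M < t0" and hi: "t0 < (real J + 1) / M"
    using i1 i2 M by (simp_all add: M_def field_simps)
  have "(real J + 1) / M \<le> 1" using J by (simp add: M_def field_simps)
  show ?thesis
  proof (cases "even J")
    case True
    define x where "x = min e (min (t0 - a) (t0 - real J / M))"
    have x: "0 < x" "x \<le> e" "x \<le> t0 - a" "x \<le> t0 - real J / M"
      using e a lo by (auto simp: x_def)
    define d where "d = x / 2"
    have d: "0 < d" "d < e" "d < t0 - a" "d < t0 - real J / M"
      using x unfolding d_def by linarith+
    have Md: "0 < M * d" "M * (t0 - d) = M * t0 - M * d" using d M by (simp_all add: algebra_simps)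
    have "lap m J (t0 - d) = lap m J t0 - M * d" using True by (simp add: lap_def M_def algebra_simps)
    moreover have "real J < M * (t0 - d)" using d(4) M by (simp add: field_simps)
    moreover have "M * (t0 - d) < real J + 1" "t0 - d < 1"
      using Md i2[folded M_def] hi d \<open>(real J + 1) / M \<le> 1\<close> by linarith+
    ultimately show ?thesis using that[of "t0 - d"] d Md by (simp add: M_def)
  next
    case False
    define x where "x = min e ((real J + 1) / M - t0)"
    have x: "0 < x" "x \<le> e" "x \<le> (real J + 1) / M - t0"
      using e hi by (auto simp: x_def)
    define d where "d = x / 2"
    have d: "0 < d" "d < e" "d < (real J + 1) / M - t0"
      using x unfolding d_def by linarith+
    have Md: "0 < M * d" "M * (t0 + d) = M * t0 + M * d" using d M by (simp_all add: algebra_simps)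
    have "lap m J (t0 + d) = lap m J t0 - M * d" using False by (simp add: lap_def M_def algebra_simps)
    moreover have "M * (t0 + d) < real J + 1" using d(3) M by (simp add: field_simps)
    moreover have "real J < M * (t0 + d)" "t0 + d < 1"
      using Md i1[folded M_def] d \<open>(real J + 1) / M \<le> 1\<close> by linarith+
    ultimately show ?thesis using that[of "t0 + d"] d Md a by (simp add: M_def)
  qed
qed

section \<open>Local injectivity and orientation of the truncation\<close>

lemma retr_Pt:
  "retr n P (Pt j u) = (if j < n \<and> tmin P j \<le> u \<and> u < 1 then Pt j u else Pt j (tmin P j))"
  by (auto simp: retr_def spanP_def)

lemma nbhd_mono: "e \<le> e' \<Longrightarrow> nbhd P t0 e \<subseteq> nbhd P t0 e'"
  by (auto simp: nbhd_def)

lemma loc_inj_if_separating: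
  assumes "e > 0"
    and "\<And>t1 t2. t1 \<in> nbhd P t0 e \<Longrightarrow> t2 \<in> nbhd P t0 e \<Longrightarrow> t1 < t2 \<Longrightarrow>
      fP m n P (Pt 0 t1) \<noteq> fP m n P (Pt 0 t2)"
  shows "loc_inj m n P t0"
proof -
  have "inj_on (fP m n P) ((\<lambda>t. Pt 0 t) ` nbhd P t0 e)"
    using assms(2) by (auto simp: inj_on_def) (metis linorder_neqE_linordered_idom)
  then show ?thesis using assms(1) unfolding loc_inj_def by blast
qed

lemma loc_pres_imp_loc_inj: "loc_pres m n P t0 \<Longrightarrow> loc_inj m n P t0"
  unfolding loc_pres_def by (elim exE conjE, rule loc_inj_if_separating) fastforce+

lemma loc_rev_imp_loc_inj: "loc_rev m n P t0 \<Longrightarrow> loc_inj m n P t0"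
  unfolding loc_rev_def by (elim exE conjE, rule loc_inj_if_separating) fastforce+

lemma not_loc_pres_and_rev:
  assumes "tmin P 0 \<le> t0" "t0 < 1" "loc_pres m n P t0" "loc_rev m n P t0"
  shows False
proof -
  obtain e1 j1 where e1: "e1 > 0" and pres: "\<forall>t1\<in>nbhd P t0 e1. \<forall>t2\<in>nbhd P t0 e1. t1 < t2 \<longrightarrow>
        (\<exists>u1 u2. fP m n P (Pt 0 t1) = Pt j1 u1 \<and> fP m n P (Pt 0 t2) = Pt j1 u2 \<and> u1 < u2)"
    using assms(3) unfolding loc_pres_def by blast
  obtain e2 j2 where e2: "e2 > 0" and rev: "\<forall>t1\<in>nbhd P t0 e2. \<forall>t2\<in>nbhd P t0 e2. t1 < t2 \<longrightarrow>
        (\<exists>u1 u2. fP m n P (Pt 0 t1) = Pt j2 u1 \<and> fP m n P (Pt 0 t2) = Pt j2 u2 \<and> u1 > u2)"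
    using assms(4) unfolding loc_rev_def by blast
  define e where "e = min e1 e2"
  define t2 where "t2 = t0 + min e (1 - t0) / 2"
  have e: "e > 0" using e1 e2 by (simp add: e_def)
  have t: "t0 \<in> nbhd P t0 e" "t2 \<in> nbhd P t0 e" "t0 < t2"
    using assms(1,2) e by (auto simp: nbhd_def t2_def min_def field_simps)
  have "nbhd P t0 e \<subseteq> nbhd P t0 e1" "nbhd P t0 e \<subseteq> nbhd P t0 e2"
    by (auto intro!: nbhd_mono simp: e_def)
  then obtain u1 u2 v1 v2 where
    "fP m n P (Pt 0 t0) = Pt j1 u1" "fP m n P (Pt 0 t2) = Pt j1 u2" "u1 < u2"
    "fP m n P (Pt 0 t0) = Pt j2 v1" "fP m n P (Pt 0 t2) = Pt j2 v2" "v1 > v2"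
    using pres rev t by blast
  then show False by auto
qed

lemma loc_pres_if_increasing:
  assumes "e > 0" and f: "\<And>t. t \<in> nbhd P t0 e \<Longrightarrow> fP m n P (Pt 0 t) = Pt j (g t)"
    and g: "\<And>t1 t2. t1 < t2 \<Longrightarrow> g t1 < g t2"
  shows "loc_pres m n P t0"
proof -
  have "\<forall>t1\<in>nbhd P t0 e. \<forall>t2\<in>nbhd P t0 e. t1 < t2 \<longrightarrow>
      (\<exists>u1 u2. fP m n P (Pt 0 t1) = Pt j u1 \<and> fP m n P (Pt 0 t2) = Pt j u2 \<and> u1 < u2)"
    using f g by auto
  then show ?thesis unfolding loc_pres_def using assms(1) by blast
qed

lemma loc_rev_if_decreasing:
  assumes "e > 0" and f: "\<And>t. t \<in> nbhd P t0 e \<Longrightarrow> fP m n P (Pt 0 t) = Pt j (g t)"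
    and g: "\<And>t1 t2. t1 < t2 \<Longrightarrow> g t2 < g t1"
  shows "loc_rev m n P t0"
proof -
  have "\<forall>t1\<in>nbhd P t0 e. \<forall>t2\<in>nbhd P t0 e. t1 < t2 \<longrightarrow>
      (\<exists>u1 u2. fP m n P (Pt 0 t1) = Pt j u1 \<and> fP m n P (Pt 0 t2) = Pt j u2 \<and> u1 > u2)"
    using f g by auto
  then show ?thesis unfolding loc_rev_def using assms(1) by blast
qed

section \<open>The truncation near the points of a \<open>\<ast>\<close>-orbit\<close>

locale star_params =
  fixes m n :: nat
  assumes m_pos: "0 < m" and two_m_le_n: "2*m \<le> n" and coprime_m_n: "coprime m n"
begin

lemma m_less_n: "m < n" using m_pos two_m_le_n by simp

lemma n_ge_2: "2 \<le> n" using m_pos two_m_le_n by simp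

end

locale star_cycle = star_params +
  fixes P :: "gpt set"
  assumes finite_P: "finite P" and P_gamma: "P \<subseteq> gamma n" and Vtx_notin: "Vtx \<notin> P"
    and fmap_closed: "x \<in> P \<Longrightarrow> fmap m n x \<in> P"
    and reach: "x \<in> P \<Longrightarrow> y \<in> P \<Longrightarrow> \<exists>k. (fmap m n ^^ k) x = y"
    and edge_nonempty: "r < n \<Longrightarrow> ptsE P r \<noteq> {}"
    and tmin_shift: "0 < r \<Longrightarrow> r < n \<Longrightarrow>
      fmap m n (Pt r (tmin P r)) = Pt ((r + m) mod n) (tmin P ((r + m) mod n))"

lemma (in star_params) star_orbit_imp_star_cycle:
  assumes "star_orbit m n P"
  shows "star_cycle m n P"
proof -
  let ?f = "fmap m n"
  obtain x p where x: "x \<in> gamma n" "p > 0" "(?f ^^ p) x = x" and P: "P = {(?f ^^ k) x | k. True}"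
    using assms unfolding star_orbit_def periodic_orbit_def by blast
  have mod_p: "(?f ^^ k) x = (?f ^^ (k mod p)) x" for k
    using funpow_mod_eq[of p ?f x k] x(3) by simp
  have "P = (\<lambda>k. (?f ^^ k) x) ` {..<p}"
  proof (intro equalityI subsetI)
    fix y assume "y \<in> P"
    then obtain k where "y = (?f ^^ (k mod p)) x" using P mod_p by auto
    then show "y \<in> (\<lambda>k. (?f ^^ k) x) ` {..<p}" using x(2) by auto
  qed (auto simp: P)
  then have fin: "finite P" by simp
  have gam: "(?f ^^ k) x \<in> gamma n" for k
    by (induction k) (auto simp: x(1) fmap_in_gamma m_less_n)
  have cl: "y \<in> P \<Longrightarrow> ?f y \<in> P" for y using P by (auto intro: exI[of _ "Suc _"])
  have reach: "\<exists>k. (?f ^^ k) y = z" if yz: "y \<in> P" "z \<in> P" for y z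
  proof -
    obtain i j where ij: "y = (?f ^^ j) x" "z = (?f ^^ i) x" using yz P by auto
    have "j \<le> p * j" using x(2) by simp
    then have "i + p*j = (i + p*j - j) + j" by linarith
    then have "(?f ^^ (i + p*j - j)) y = (?f ^^ (i + p*j)) x" by (metis ij funpow_add comp_apply)
    also have "\<dots> = z" using mod_p[of "i + p*j"] mod_p[of i] ij by simp
    finally show ?thesis by blast
  qed
  have "Vtx \<notin> P"
  proof
    assume V: "Vtx \<in> P"
    have fix_V: "(?f ^^ i) Vtx = Vtx" for i by (induction i) auto
    have "x \<in> P" using P by (auto intro: exI[of _ 0])
    then have "x = Vtx" using reach[OF V] fix_V by metis
    then have "P = {Vtx}" using P fix_V by auto
    then show False using assms by (simp add: star_orbit_def)
  qed
  then show ?thesis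
    using fin gam cl reach assms m_pos two_m_le_n coprime_m_n
    by unfold_locales (auto simp: star_orbit_def P)
qed

definition coord :: "gpt set \<Rightarrow> nat \<Rightarrow> nat \<Rightarrow> real" where
  "coord P r s = sorted_list_of_set (ptsE P r) ! s"

lemma lab_coord: "lab P r s = Pt r (coord P r s)"
  by (simp add: lab_def coord_def)

context star_cycle
begin

lemma Pt_bounds: "Pt r t \<in> P \<Longrightarrow> r < n \<and> 0 \<le> t \<and> t < 1"
  using P_gamma by (auto simp: gamma_def)

lemma ptsE_bounds: "t \<in> ptsE P r \<Longrightarrow> r < n \<and> 0 \<le> t \<and> t < 1"
  using Pt_bounds by (simp add: ptsE_def)

lemma finite_ptsE: "finite (ptsE P r)"
proof -
  have "ptsE P r \<subseteq> (\<lambda>x. case x of Pt r t \<Rightarrow> t | Vtx \<Rightarrow> 0) ` P"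
    by (force simp: ptsE_def image_iff)
  then show ?thesis using finite_P finite_surj by blast
qed

lemma card_ptsE_pos: "r < n \<Longrightarrow> 0 < card (ptsE P r)"
  using finite_ptsE edge_nonempty by (simp add: card_gt_0_iff)

lemma tmin_in_ptsE: "r < n \<Longrightarrow> tmin P r \<in> ptsE P r"
  and tmin_le: "r < n \<Longrightarrow> t \<in> ptsE P r \<Longrightarrow> tmin P r \<le> t"
  using finite_ptsE edge_nonempty by (simp_all add: tmin_def)

lemma tmin_nonneg: "r < n \<Longrightarrow> 0 \<le> tmin P r"
  using tmin_in_ptsE ptsE_bounds by blast

lemma tmin_less_1: "r < n \<Longrightarrow> tmin P r < 1"
  using tmin_in_ptsE ptsE_bounds by blast

lemma Pt_tmin_in: "r < n \<Longrightarrow> Pt r (tmin P r) \<in> P"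
  using tmin_in_ptsE by (simp add: ptsE_def)

lemma inj_on_fmap: "inj_on (fmap m n) P"
proof (rule finite_surj_inj[OF finite_P], rule subsetI)
  fix y assume y: "y \<in> P"
  obtain k where k: "(fmap m n ^^ k) (fmap m n y) = y" using reach[OF fmap_closed[OF y] y] by blast
  show "y \<in> fmap m n ` P"
  proof (cases k)
    case 0 then show ?thesis using k y by (metis funpow_0 image_eqI)
  next
    case (Suc k')
    then have "y = fmap m n ((fmap m n ^^ k') (fmap m n y))" using k by (simp add: funpow_swap1)
    moreover have "(fmap m n ^^ k') (fmap m n y) \<in> P"
      by (rule funpow_closed[OF fmap_closed fmap_closed[OF y]])
    ultimately show ?thesis by blast
  qed
qed

text \<open>No point of \<open>P\<close> is an initial point: by the shift condition an initial point would
  propagate to \<open>Pt 0 0\<close>, a fixed point of \<open>f\<close>, contradicting cyclicity.\<close>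

lemma Pt_0_notin: "Pt r 0 \<notin> P"
proof
  assume a: "Pt r 0 \<in> P"
  let ?S = "{r. r < n \<and> Pt r 0 \<in> P}"
  have "0 \<in> ?S"
  proof (rule coprime_shift_reaches_0[OF m_pos coprime_m_n])
    show "r \<in> ?S" "r < n" using a Pt_bounds[OF a] by simp_all
    fix r assume r: "r \<in> ?S" "0 < r" "r < n"
    have "tmin P r = 0"
      using tmin_le[of r 0] tmin_nonneg[of r] r by (simp add: ptsE_def)
    then have "fmap m n (Pt r 0) = Pt ((r + m) mod n) (tmin P ((r + m) mod n))"
      using tmin_shift[of r] r by simp
    moreover have "fmap m n (Pt r 0) = Pt ((r + m) mod n) 0" using r by simp
    moreover have "fmap m n (Pt r 0) \<in> P" using r fmap_closed by blast
    ultimately show "(r + m) mod n \<in> ?S" using n_ge_2 by auto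
  qed
  then have P00: "Pt 0 0 \<in> P" by simp
  have fixed: "(fmap m n ^^ k) (Pt 0 0) = Pt 0 0" for k
    by (induction k) (auto simp: mkpt_def)
  obtain t where "Pt 1 t \<in> P" using edge_nonempty[of 1] n_ge_2 by (auto simp: ptsE_def)
  then show False using reach[OF P00] fixed by (metis gpt.inject zero_neq_one)
qed

lemma coord_strict_mono: "i < j \<Longrightarrow> j < card (ptsE P r) \<Longrightarrow> coord P r i < coord P r j"
  using finite_ptsE[of r] unfolding coord_def
  by (metis length_sorted_list_of_set sorted_wrt_iff_nth_less strict_sorted_list_of_set)

lemma coord_less_imp_less:
  "a < card (ptsE P r) \<Longrightarrow> b < card (ptsE P r) \<Longrightarrow> coord P r a < coord P r b \<Longrightarrow> a < b"
  using coord_strict_mono[of b a r] by (metis linorder_neqE_nat order_less_asym)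

lemma Pt_coord_in: "s < card (ptsE P r) \<Longrightarrow> Pt r (coord P r s) \<in> P"
  using finite_ptsE[of r] unfolding coord_def ptsE_def
  by (metis length_sorted_list_of_set mem_Collect_eq nth_mem ptsE_def set_sorted_list_of_set)

lemma idx_coord: "s < card (ptsE P r) \<Longrightarrow> idx P (Pt r (coord P r s)) = (r, s)"
  using card_less_sorted_nth[OF finite_ptsE] by (simp add: coord_def)

lemma idx_Pt: "Pt r t \<in> P \<Longrightarrow> \<exists>s < card (ptsE P r). idx P (Pt r t) = (r, s) \<and> coord P r s = t"
proof -
  assume "Pt r t \<in> P"
  then have "t \<in> ptsE P r" by (simp add: ptsE_def)
  then obtain s where "s < card (ptsE P r)" "t = coord P r s"
    using finite_ptsE[of r] unfolding coord_def
    by (metis in_set_conv_nth length_sorted_list_of_set set_sorted_list_of_set)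
  then show ?thesis using idx_coord by auto
qed

lemma coord_0: "r < n \<Longrightarrow> coord P r 0 = tmin P r"
  using sorted_list_of_set_nonempty[of "ptsE P r"] finite_ptsE edge_nonempty
  by (simp add: coord_def tmin_def)

lemma coord_eq_iff:
  "a < card (ptsE P r) \<Longrightarrow> b < card (ptsE P r) \<Longrightarrow> coord P r a = coord P r b \<longleftrightarrow> a = b"
  using coord_strict_mono by (metis linorder_neqE_nat order_less_irrefl)

text \<open>Points of \<open>P\<close> on \<open>e\<^sub>0\<close> avoid the breakpoints \<open>J/(2m+1)\<close>, which are mapped to the
  vertex or to initial points.\<close>

lemma edge0_lap_bounds:
  assumes "Pt 0 t \<in> P"
  shows "real (lap_of m t) < real (2*m+1) * t" "real (2*m+1) * t < real (lap_of m t) + 1"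
proof -
  have t: "0 \<le> t" "t < 1" using Pt_bounds[OF assms] by auto
  note bounds = lap_of_bounds[where m=m, OF t(1)]
  show "real (2*m+1) * t < real (lap_of m t) + 1" using bounds(2) .
  show "real (lap_of m t) < real (2*m+1) * t"
  proof (rule ccontr)
    assume "\<not> ?thesis"
    then have brk: "real (2*m+1) * t = real (lap_of m t)" using bounds(1) by simp
    show False
    proof (cases "lap_of m t = 0")
      case True
      then show False using brk assms Pt_0_notin by simp
    next
      case False
      have "fmap m n (Pt 0 t) \<in> P" using fmap_closed[OF assms] .
      then show False using fmap_edge0_breakpoint[OF brk t False] Vtx_notin Pt_0_notin
        by (auto split: if_splits)
    qed
  qed
qed

lemma fmap_edge0:
  assumes "Pt 0 t \<in> P"
  shows "fmap m n (Pt 0 t) = Pt (lap_edge (lap_of m t)) (lap m (lap_of m t) t)"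
    and "lap_of m t \<le> 2*m"
proof -
  have t: "0 \<le> t" "t < 1" using Pt_bounds[OF assms] by auto
  note b = edge0_lap_bounds[OF assms]
  show "fmap m n (Pt 0 t) = Pt (lap_edge (lap_of m t)) (lap m (lap_of m t) t)"
    using fmap_edge0_lap(1)[OF t b] .
  have "real (2*m+1) * t < real (2*m+1)" using t by simp
  then show "lap_of m t \<le> 2*m" using b(1) by linarith
qed

lemma lap_edge_le_m: "Pt 0 t \<in> P \<Longrightarrow> lap_edge (lap_of m t) \<le> m"
  using lap_edge_mono[OF fmap_edge0(2)] by (simp add: lap_edge_def)

text \<open>If \<open>f\<close> maps a point of \<open>e\<^sub>0\<close> to the first point \<open>p\<^sub>j\<close> of \<open>P\<close> on its target edge
  and \<open>j < m\<close>, then \<open>p\<^sub>r\<close> with \<open>r + m \<equiv> j\<close> would be a second preimage of \<open>p\<^sub>j\<close>.\<close>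

lemma fold_target_eq_m:
  assumes P0: "Pt 0 t \<in> P" and at_tmin: "lap m (lap_of m t) t = tmin P (lap_edge (lap_of m t))"
  shows "lap_edge (lap_of m t) = m"
proof (rule ccontr)
  define j where "j = lap_edge (lap_of m t)"
  assume "lap_edge (lap_of m t) \<noteq> m"
  then have jm: "j < m" using lap_edge_le_m[OF P0] by (simp add: j_def)
  define r where "r = j + n - m"
  have "r + m = j + n" using m_less_n by (simp add: r_def)
  then have r: "0 < r" "r < n" "(r + m) mod n = j" using jm m_less_n by (simp_all add: r_def)
  have "fmap m n (Pt r (tmin P r)) = Pt j (tmin P j)" using tmin_shift[OF r(1,2)] r(3) by simp
  also have "\<dots> = fmap m n (Pt 0 t)" using fmap_edge0(1)[OF P0] at_tmin by (simp add: j_def)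
  finally have "Pt r (tmin P r) = Pt 0 t"
    using inj_onD[OF inj_on_fmap] Pt_tmin_in[OF r(2)] P0 by blast
  then show False using r(1) by simp
qed

lemma fP_eq_lap_near:
  assumes P0: "Pt 0 t0 \<in> P" and J: "J = lap_of m t0" and above: "tmin P (lap_edge J) < lap m J t0"
  shows "\<exists>e>0. \<forall>t\<in>nbhd P t0 e. fP m n P (Pt 0 t) = Pt (lap_edge J) (lap m J t)"
proof -
  define M where "M = real (2*m+1)"
  have M: "M \<ge> 1" by (simp add: M_def)
  have i1: "real J < M * t0" and i2: "M * t0 < real J + 1"
    using edge0_lap_bounds[OF P0] J by (simp_all add: M_def)
  have jn: "lap_edge J < n" using lap_edge_le_m[OF P0] m_less_n J by simp
  define e where "e = min (min (t0 - real J / M) ((real J + 1) / M - t0))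
    ((lap m J t0 - tmin P (lap_edge J)) / M)"
  have e: "e > 0" using i1 i2 M above by (simp add: e_def field_simps)
  have e_le: "e \<le> t0 - real J / M" "e \<le> (real J + 1) / M - t0"
    "e \<le> (lap m J t0 - tmin P (lap_edge J)) / M"
    by (simp_all add: e_def)
  have "fP m n P (Pt 0 t) = Pt (lap_edge J) (lap m J t)" if "t \<in> nbhd P t0 e" for t
  proof -
    have t: "tmin P 0 \<le> t" "t < 1" "\<bar>t - t0\<bar> < e" using that by (auto simp: nbhd_def)
    have "real J / M < t" "t < (real J + 1) / M" using t(3) e_le by linarith+
    then have a: "real J < M * t" "M * t < real J + 1" using M by (simp_all add: field_simps)
    have t0': "0 \<le> t" using t(1) tmin_nonneg[of 0] n_ge_2 by simp
    note f = fmap_edge0_lap(1)[OF t0' t(2) a[unfolded M_def], of n]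
      fmap_edge0_lap(2)[OF t0' t(2) a[unfolded M_def]]
    have "\<bar>lap m J t - lap m J t0\<bar> = M * \<bar>t - t0\<bar>" by (simp add: lap_diff abs_mult M_def)
    also have "\<dots> < M * e" using t M by simp
    also have "\<dots> \<le> lap m J t0 - tmin P (lap_edge J)" using e_le(3) M by (simp add: field_simps)
    finally have "tmin P (lap_edge J) < lap m J t" by linarith
    then show ?thesis using f jn by (simp add: fP_def retr_Pt)
  qed
  then show ?thesis using e by blast
qed

lemma loc_type_regular:
  assumes P0: "Pt 0 t0 \<in> P" and J: "J = lap_of m t0" and above: "tmin P (lap_edge J) < lap m J t0"
  shows "even J \<Longrightarrow> loc_pres m n P t0 \<and> \<not> loc_rev m n P t0"
    and "odd J \<Longrightarrow> loc_rev m n P t0 \<and> \<not> loc_pres m n P t0"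
proof -
  obtain e where e: "e > 0"
    and near: "\<forall>t\<in>nbhd P t0 e. fP m n P (Pt 0 t) = Pt (lap_edge J) (lap m J t)"
    using fP_eq_lap_near[OF P0 J above] by blast
  have t0: "tmin P 0 \<le> t0" "t0 < 1"
    using tmin_le[of 0 t0] Pt_bounds[OF P0] P0 by (auto simp: ptsE_def)
  show "even J \<Longrightarrow> loc_pres m n P t0 \<and> \<not> loc_rev m n P t0"
  proof
    assume parity: "even J"
    show pres: "loc_pres m n P t0"
      by (rule loc_pres_if_increasing[OF e, where j = "lap_edge J" and g = "lap m J"])
        (use near lap_strict_mono[OF parity] in auto)
    show "\<not> loc_rev m n P t0" using not_loc_pres_and_rev[OF t0 pres] by blast
  qed
  show "odd J \<Longrightarrow> loc_rev m n P t0 \<and> \<not> loc_pres m n P t0"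
  proof
    assume parity: "odd J"
    show rev: "loc_rev m n P t0"
      by (rule loc_rev_if_decreasing[OF e, where j = "lap_edge J" and g = "lap m J"])
        (use near lap_strict_antimono[OF parity] in auto)
    show "\<not> loc_pres m n P t0" using not_loc_pres_and_rev[OF t0 _ rev] by blast
  qed
qed

text \<open>At a point whose image is the first point of \<open>P\<close> on its edge, the retraction \<open>r\<^sub>P\<close>
  flattens the half of the lap on which \<open>f\<close> decreases, so \<open>f\<^sup>P\<close> is not injective nearby.\<close>

lemma fold_not_loc_inj:
  assumes P0: "Pt 0 t0 \<in> P" and J: "J = lap_of m t0"
    and at_tmin: "lap m J t0 = tmin P (lap_edge J)" and not_first: "tmin P 0 < t0"
  shows "\<not> loc_inj m n P t0"
proof
  assume "loc_inj m n P t0"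
  then obtain e where e: "e > 0" and inj: "inj_on (fP m n P) ((\<lambda>t. Pt 0 t) ` nbhd P t0 e)"
    unfolding loc_inj_def by blast
  have jn: "lap_edge J < n" using lap_edge_le_m[OF P0] m_less_n J by simp
  have t0: "0 \<le> t0" "t0 < 1" using Pt_bounds[OF P0] by auto
  obtain t where t: "t \<noteq> t0" "tmin P 0 \<le> t" "t < 1" "\<bar>t - t0\<bar> < e"
    "real J < real (2*m+1) * t" "real (2*m+1) * t < real J + 1" "lap m J t < lap m J t0"
  proof (rule lap_decreases_nearby)
    show "real J < real (2*m+1) * t0" "real (2*m+1) * t0 < real J + 1" "J \<le> 2*m"
      using edge0_lap_bounds[OF P0] fmap_edge0(2)[OF P0] J by simp_all
  qed (use not_first e that in auto)
  have "0 \<le> t" using t(2) tmin_nonneg[of 0] n_ge_2 by simp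
  then have "fP m n P (Pt 0 t) = Pt (lap_edge J) (tmin P (lap_edge J))"
    using fmap_edge0_lap(1)[of t J m n] t at_tmin by (simp add: fP_def retr_Pt)
  also have "\<dots> = fP m n P (Pt 0 t0)"
    using fmap_edge0(1)[OF P0] J at_tmin jn tmin_less_1 by (simp add: fP_def retr_Pt)
  finally have "fP m n P (Pt 0 t) = fP m n P (Pt 0 t0)" .
  moreover have "Pt 0 t \<in> (\<lambda>t. Pt 0 t) ` nbhd P t0 e" "Pt 0 t0 \<in> (\<lambda>t. Pt 0 t) ` nbhd P t0 e"
    using t e not_first t0 by (auto simp: nbhd_def)
  ultimately have "Pt 0 t = Pt 0 t0" using inj_onD[OF inj] by blast
  then show False using t(1) by simp
qed

end

section \<open>Necessity of the conditions\<close>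

definition star_data_conditions ::
    "nat \<Rightarrow> nat \<Rightarrow> nat \<Rightarrow> bool \<Rightarrow> nat list \<Rightarrow> (nat \<times> nat \<Rightarrow> nat \<times> nat) \<Rightarrow>
     nat set \<Rightarrow> nat set \<Rightarrow> nat set \<Rightarrow> bool" where
  "star_data_conditions m n k gB N \<pi> A B C \<longleftrightarrow>
    (\<forall>r. 0 < r \<and> r < n \<longrightarrow>
        (\<forall>s < N ! r. fst (\<pi> (r, s)) = (r + m) mod n) \<and>
        (\<forall>s1 s2. s1 < s2 \<and> s2 < N ! r \<longrightarrow> snd (\<pi> (r, s1)) < snd (\<pi> (r, s2))) \<and>
        snd (\<pi> (r, 0)) = 0) \<and>
     0 \<in> (if gB then B else A) \<and>
     fst (\<pi> (0, 0)) = k \<and>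
     (\<forall>c\<in>C. \<pi> (0, c) = (m, 0)) \<and>
     (\<forall>s < N ! 0. k \<le> fst (\<pi> (0, s)) \<and> fst (\<pi> (0, s)) \<le> m) \<and>
     (\<forall>s1 s2. s1 \<le> s2 \<and> s2 < N ! 0 \<longrightarrow> fst (\<pi> (0, s1)) \<le> fst (\<pi> (0, s2))) \<and>
     (\<forall>s1 s2. s1 < s2 \<and> s2 < N ! 0 \<and> fst (\<pi> (0, s1)) = fst (\<pi> (0, s2)) \<and> s1 \<in> B \<union> C
        \<longrightarrow> s2 \<in> B) \<and>
     (\<forall>s1 s2. s1 < s2 \<and> s2 < N ! 0 \<and> fst (\<pi> (0, s1)) = fst (\<pi> (0, s2)) \<and> s1 \<in> A \<and> s2 \<in> A
        \<longrightarrow> snd (\<pi> (0, s1)) > snd (\<pi> (0, s2))) \<and>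
     (\<forall>s1 s2. s1 < s2 \<and> s2 < N ! 0 \<and> fst (\<pi> (0, s1)) = fst (\<pi> (0, s2)) \<and> s1 \<in> B \<and> s2 \<in> B
        \<longrightarrow> snd (\<pi> (0, s1)) < snd (\<pi> (0, s2)))"

locale star_orbit_data = star_cycle +
  fixes k :: nat and gB :: bool and N :: "nat list" and \<pi> :: "nat \<times> nat \<Rightarrow> nat \<times> nat"
    and A B C :: "nat set"
  assumes in_Pset: "Pset m n k gB P" and data: "dataP m n P = (N, \<pi>, (A, B, C))"
    and card_C: "card C = 1" and k_less_m: "k < m"
begin

lemma N_nth: "r < n \<Longrightarrow> N ! r = card (ptsE P r)"
  using data by (auto simp: dataP_def dataN_def)

lemma N_pos: "r < n \<Longrightarrow> 0 < N ! r"
  using N_nth card_ptsE_pos by simp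

lemma pi_coord: "r < n \<Longrightarrow> s < N ! r \<Longrightarrow> \<pi> (r, s) = idx P (fmap m n (Pt r (coord P r s)))"
  using data N_nth by (auto simp: dataP_def dataPi_def Lset_def dataN_def lab_coord)

lemma A_eq: "A = {s. s < N ! 0 \<and> loc_rev m n P (coord P 0 s)}"
  and B_eq: "B = {s. s < N ! 0 \<and> loc_pres m n P (coord P 0 s)}"
  and C_eq: "C = {s. s < N ! 0 \<and> \<not> loc_inj m n P (coord P 0 s)}"
  using data N_nth[of 0] n_ge_2 by (auto simp: dataP_def dataABC_def Let_def coord_def)

lemma pi_image:
  assumes "r < n" "s < N ! r" "fmap m n (Pt r (coord P r s)) = Pt j u"
  shows "fst (\<pi> (r, s)) = j" "snd (\<pi> (r, s)) < N ! j"
    "coord P j (snd (\<pi> (r, s))) = u"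
proof -
  have ju: "Pt j u \<in> P" using fmap_closed[OF Pt_coord_in] assms N_nth by metis
  then obtain s' where "s' < card (ptsE P j)" "idx P (Pt j u) = (j, s')" "coord P j s' = u"
    using idx_Pt by blast
  moreover have "j < n" using Pt_bounds[OF ju] by blast
  ultimately show "fst (\<pi> (r, s)) = j" "snd (\<pi> (r, s)) < N ! j"
    "coord P j (snd (\<pi> (r, s))) = u"
    using pi_coord[OF assms(1,2)] assms(3) N_nth by auto
qed

lemma pi_shift:
  assumes "0 < r" "r < n" "s < N ! r"
  shows "fst (\<pi> (r, s)) = (r + m) mod n" "snd (\<pi> (r, s)) < N ! ((r + m) mod n)"
    "coord P ((r + m) mod n) (snd (\<pi> (r, s))) = coord P r s"
  using pi_image[OF assms(2,3)] assms(1) by simp_all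

lemma pi_snd_strict_mono:
  assumes "0 < r" "r < n" "s1 < s2" "s2 < N ! r"
  shows "snd (\<pi> (r, s1)) < snd (\<pi> (r, s2))"
proof -
  let ?r' = "(r + m) mod n"
  have r'n: "?r' < n" using n_ge_2 by simp
  have "coord P r s1 < coord P r s2" using coord_strict_mono assms N_nth by simp
  then have "coord P ?r' (snd (\<pi> (r, s1))) < coord P ?r' (snd (\<pi> (r, s2)))"
    using pi_shift(3)[OF assms(1,2)] assms by simp
  moreover have "snd (\<pi> (r, s1)) < card (ptsE P ?r')" "snd (\<pi> (r, s2)) < card (ptsE P ?r')"
    using pi_shift(2)[OF assms(1,2)] assms N_nth[OF r'n] by auto
  ultimately show ?thesis using coord_less_imp_less by blast
qed

lemma pi_first_point:
  assumes "0 < r" "r < n"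
  shows "snd (\<pi> (r, 0)) = 0"
proof -
  let ?r' = "(r + m) mod n"
  have r'n: "?r' < n" using n_ge_2 by simp
  note shift = pi_shift[OF assms N_pos[OF assms(2)]]
  have "tmin P r = tmin P ?r'" using tmin_shift[OF assms] assms by simp
  then have "coord P ?r' (snd (\<pi> (r, 0))) = coord P ?r' 0"
    using shift(3) coord_0 assms r'n by simp
  then show ?thesis using coord_eq_iff shift(2) N_pos[OF r'n] N_nth[OF r'n] by simp
qed

definition lap0 :: "nat \<Rightarrow> nat" where "lap0 s = lap_of m (coord P 0 s)"

definition image0 :: "nat \<Rightarrow> real" where "image0 s = lap m (lap0 s) (coord P 0 s)"

lemma Pt_coord0_in: "s < N ! 0 \<Longrightarrow> Pt 0 (coord P 0 s) \<in> P"
  using Pt_coord_in N_nth n_ge_2 by simp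

lemma pi_edge0:
  assumes "s < N ! 0"
  shows "fst (\<pi> (0, s)) = lap_edge (lap0 s)" "snd (\<pi> (0, s)) < N ! lap_edge (lap0 s)"
    "coord P (lap_edge (lap0 s)) (snd (\<pi> (0, s))) = image0 s"
  using pi_image[OF _ assms fmap_edge0(1)[OF Pt_coord0_in[OF assms]]] n_ge_2
  unfolding lap0_def image0_def by simp_all

lemma lap_edge_lap0_le_m: "s < N ! 0 \<Longrightarrow> lap_edge (lap0 s) \<le> m"
  using lap_edge_le_m[OF Pt_coord0_in] by (simp add: lap0_def)

lemma lap0_mono: "s1 \<le> s2 \<Longrightarrow> s2 < N ! 0 \<Longrightarrow> lap0 s1 \<le> lap0 s2"
  using coord_strict_mono[of s1 s2 0] N_nth[of 0] n_ge_2 unfolding lap0_def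
  by (cases "s1 = s2") (auto intro: lap_of_mono)

lemma tmin_le_image0:
  assumes "s < N ! 0"
  shows "tmin P (lap_edge (lap0 s)) \<le> image0 s"
proof -
  have image: "fmap m n (Pt 0 (coord P 0 s)) = Pt (lap_edge (lap0 s)) (image0 s)"
    unfolding lap0_def image0_def by (rule fmap_edge0(1)[OF Pt_coord0_in[OF assms]])
  have "fmap m n (Pt 0 (coord P 0 s)) \<in> P" by (rule fmap_closed[OF Pt_coord0_in[OF assms]])
  then have "Pt (lap_edge (lap0 s)) (image0 s) \<in> P" unfolding image .
  then show ?thesis using tmin_le Pt_bounds by (simp add: ptsE_def)
qed

lemma pi_fst_00: "fst (\<pi> (0, 0)) = k"
proof -
  obtain t where "fmap m n (lab P 0 0) = Pt k t" using in_Pset by (auto simp: Pset_def)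
  then have "fmap m n (Pt 0 (coord P 0 0)) = Pt k t" by (metis lab_coord)
  then show ?thesis using pi_image(1)[of 0 0] N_pos n_ge_2 by simp
qed

lemma regular_point_type:
  assumes s: "s < N ! 0" and above: "tmin P (lap_edge (lap0 s)) < image0 s"
  shows "s \<notin> C" "s \<in> B \<longleftrightarrow> even (lap0 s)" "s \<in> A \<longleftrightarrow> odd (lap0 s)"
proof -
  note type = loc_type_regular[OF Pt_coord0_in[OF s] lap0_def above[unfolded image0_def]]
  show "s \<notin> C"
    using type loc_pres_imp_loc_inj loc_rev_imp_loc_inj unfolding C_eq
    by (cases "even (lap0 s)") auto
  show "s \<in> B \<longleftrightarrow> even (lap0 s)" "s \<in> A \<longleftrightarrow> odd (lap0 s)"
    using type s unfolding A_eq B_eq by auto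
qed

lemma fold_point_type:
  assumes s: "s < N ! 0" and at_tmin: "image0 s = tmin P (lap_edge (lap0 s))"
  shows "lap_edge (lap0 s) = m" "\<pi> (0, s) = (m, 0)" "0 < s" "s \<in> C" "s \<notin> A" "s \<notin> B"
proof -
  show edge: "lap_edge (lap0 s) = m"
    using fold_target_eq_m[OF Pt_coord0_in[OF s]] at_tmin by (simp add: lap0_def image0_def)
  have "coord P m (snd (\<pi> (0, s))) = coord P m 0"
    using pi_edge0(3)[OF s] at_tmin edge coord_0 m_less_n by simp
  moreover have "snd (\<pi> (0, s)) < card (ptsE P m)" "0 < card (ptsE P m)"
    using pi_edge0(2)[OF s] edge N_nth m_less_n card_ptsE_pos by simp_all
  ultimately have "snd (\<pi> (0, s)) = 0" using coord_eq_iff by blast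
  then show pi: "\<pi> (0, s) = (m, 0)" using pi_edge0(1)[OF s] edge by (simp add: prod_eq_iff)
  show "0 < s"
  proof (rule ccontr)
    assume "\<not> 0 < s"
    then have "fst (\<pi> (0, 0)) = m" using pi by simp
    then show False using pi_fst_00 k_less_m by simp
  qed
  then have "tmin P 0 < coord P 0 s" using coord_strict_mono coord_0 s N_nth n_ge_2 by fastforce
  then have "\<not> loc_inj m n P (coord P 0 s)"
    using fold_not_loc_inj[OF Pt_coord0_in[OF s] lap0_def] at_tmin by (simp add: image0_def)
  then show "s \<in> C" "s \<notin> A" "s \<notin> B"
    using s loc_pres_imp_loc_inj loc_rev_imp_loc_inj unfolding A_eq B_eq C_eq by auto
qed

lemma C_target:
  assumes "c \<in> C"
  shows "\<pi> (0, c) = (m, 0)"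
proof -
  have c: "c < N ! 0" using assms C_eq by simp
  have "\<not> tmin P (lap_edge (lap0 c)) < image0 c" using regular_point_type(1)[OF c] assms by blast
  then show ?thesis using fold_point_type(2)[OF c] tmin_le_image0[OF c] by simp
qed

lemma same_target_lap_eq:
  assumes "s1 \<le> s2" "s2 < N ! 0" "fst (\<pi> (0, s1)) = fst (\<pi> (0, s2))"
    and "even (lap0 s1) \<or> odd (lap0 s2)"
  shows "lap0 s1 = lap0 s2"
proof -
  have "lap_edge (lap0 s1) = lap_edge (lap0 s2)" using assms(1-3) pi_edge0(1) by simp
  moreover have "lap0 s1 \<le> lap0 s2" using lap0_mono assms by simp
  ultimately show ?thesis using assms(4) lap_edge_eq_even_le lap_edge_eq_odd_le by blast
qed

lemma same_target_B_or_C_then_B: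
  assumes s: "s1 < s2" "s2 < N ! 0" and same: "fst (\<pi> (0, s1)) = fst (\<pi> (0, s2))"
    and s1: "s1 \<in> B \<union> C"
  shows "s2 \<in> B"
proof (rule ccontr)
  assume s2: "s2 \<notin> B"
  have s1N: "s1 < N ! 0" using s by simp
  have lt: "coord P 0 s1 < coord P 0 s2" using coord_strict_mono s N_nth n_ge_2 by simp
  have edge: "lap_edge (lap0 s1) = lap_edge (lap0 s2)" using same pi_edge0 s1N s(2) by simp
  note ge1 = tmin_le_image0[OF s1N] and ge2 = tmin_le_image0[OF s(2)]
  show False
  proof (cases "tmin P (lap_edge (lap0 s1)) < image0 s1")
    case reg1: True
    then have ev: "even (lap0 s1)" using regular_point_type[OF s1N] s1 by auto
    then have eq: "lap0 s1 = lap0 s2" using same_target_lap_eq s same by simp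
    show False
    proof (cases "tmin P (lap_edge (lap0 s2)) < image0 s2")
      case True
      then show False using regular_point_type(2)[OF s(2)] s2 ev eq by simp
    next
      case False
      have "image0 s1 < image0 s2" using lap_strict_mono[OF ev lt] eq by (simp add: image0_def)
      then show False using False ge1 edge by simp
    qed
  next
    case fold1: False
    then have at1: "image0 s1 = tmin P (lap_edge (lap0 s1))" using ge1 by simp
    show False
    proof (cases "tmin P (lap_edge (lap0 s2)) < image0 s2")
      case True
      then have od: "odd (lap0 s2)" using regular_point_type[OF s(2)] s2 by simp
      then have eq: "lap0 s1 = lap0 s2" using same_target_lap_eq s same by simp
      have "image0 s2 < image0 s1" using lap_strict_antimono[OF _ lt] od eq by (simp add: image0_def)
      then show False using at1 ge2 edge by simp
    next
      case False
      then have "s1 \<in> C" "s2 \<in> C" using fold_point_type(4) at1 ge2 s1N s(2) by auto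
      moreover obtain c where "C = {c}" using card_C by (rule card_1_singletonE)
      ultimately show False using s(1) by simp
    qed
  qed
qed

lemma same_target_same_lap:
  assumes s: "s1 < s2" "s2 < N ! 0" "fst (\<pi> (0, s1)) = fst (\<pi> (0, s2))"
    and AB: "(s1 \<in> A \<and> s2 \<in> A) \<or> (s1 \<in> B \<and> s2 \<in> B)"
  shows "lap0 s1 = lap0 s2" "s1 \<in> A \<Longrightarrow> odd (lap0 s1)" "s1 \<in> B \<Longrightarrow> even (lap0 s1)"
proof -
  have regular: "tmin P (lap_edge (lap0 s)) < image0 s" if "s < N ! 0" "s \<in> A \<union> B" for s
  proof (rule ccontr)
    assume "\<not> ?thesis"
    then have "image0 s = tmin P (lap_edge (lap0 s))" using tmin_le_image0[OF that(1)] by simp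
    then show False using fold_point_type(5,6)[OF that(1)] that(2) by blast
  qed
  have s1N: "s1 < N ! 0" using s by simp
  have "s1 \<in> A \<union> B" "s2 \<in> A \<union> B" using AB by auto
  note t1 = regular_point_type[OF s1N regular[OF s1N \<open>s1 \<in> A \<union> B\<close>]]
    and t2 = regular_point_type[OF s(2) regular[OF s(2) \<open>s2 \<in> A \<union> B\<close>]]
  show "s1 \<in> A \<Longrightarrow> odd (lap0 s1)" "s1 \<in> B \<Longrightarrow> even (lap0 s1)" using t1 AB by auto
  have "even (lap0 s1) \<or> odd (lap0 s2)" using t1 t2 AB by auto
  then show "lap0 s1 = lap0 s2" using same_target_lap_eq[OF less_imp_le[OF s(1)] s(2,3)] by blast
qed

lemma pi_snd_less_if_image0_less:
  assumes s: "s1 < N ! 0" "s2 < N ! 0" and same: "fst (\<pi> (0, s1)) = fst (\<pi> (0, s2))"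
    and less: "image0 s1 < image0 s2"
  shows "snd (\<pi> (0, s1)) < snd (\<pi> (0, s2))"
proof -
  define j where "j = lap_edge (lap0 s1)"
  have j: "j < n" "lap_edge (lap0 s2) = j"
    using lap_edge_lap0_le_m[OF s(1)] m_less_n same pi_edge0(1) s by (simp_all add: j_def)
  have "coord P j (snd (\<pi> (0, s1))) < coord P j (snd (\<pi> (0, s2)))"
    using pi_edge0(3)[OF s(1)] pi_edge0(3)[OF s(2)] less j by (simp add: j_def)
  then show ?thesis
    using coord_less_imp_less pi_edge0(2)[OF s(1)] pi_edge0(2)[OF s(2)] N_nth[OF j(1)] j
    by (simp add: j_def)
qed

lemma same_target_A_rev:
  assumes "s1 < s2" "s2 < N ! 0" "fst (\<pi> (0, s1)) = fst (\<pi> (0, s2))" "s1 \<in> A" "s2 \<in> A"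
  shows "snd (\<pi> (0, s2)) < snd (\<pi> (0, s1))"
proof -
  note lap = same_target_same_lap[OF assms(1-3)]
  have "coord P 0 s1 < coord P 0 s2" using coord_strict_mono assms N_nth n_ge_2 by simp
  then have "image0 s2 < image0 s1" using lap_strict_antimono lap assms by (simp add: image0_def)
  then show ?thesis using pi_snd_less_if_image0_less assms by simp
qed

lemma same_target_B_pres:
  assumes "s1 < s2" "s2 < N ! 0" "fst (\<pi> (0, s1)) = fst (\<pi> (0, s2))" "s1 \<in> B" "s2 \<in> B"
  shows "snd (\<pi> (0, s1)) < snd (\<pi> (0, s2))"
proof -
  note lap = same_target_same_lap[OF assms(1-3)]
  have "coord P 0 s1 < coord P 0 s2" using coord_strict_mono assms N_nth n_ge_2 by simp
  then have "image0 s1 < image0 s2" using lap_strict_mono lap assms by (simp add: image0_def)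
  then show ?thesis using pi_snd_less_if_image0_less assms by simp
qed

lemma conditions: "star_data_conditions m n k gB N \<pi> A B C"
proof -
  have edges: "\<forall>r. 0 < r \<and> r < n \<longrightarrow>
      (\<forall>s < N ! r. fst (\<pi> (r, s)) = (r + m) mod n) \<and>
      (\<forall>s1 s2. s1 < s2 \<and> s2 < N ! r \<longrightarrow> snd (\<pi> (r, s1)) < snd (\<pi> (r, s2))) \<and>
      snd (\<pi> (r, 0)) = 0"
    by (auto intro: pi_shift(1) pi_snd_strict_mono pi_first_point)
  have gamma: "0 \<in> (if gB then B else A)" using in_Pset data by (auto simp: Pset_def dataP_def)
  have mono: "fst (\<pi> (0, s1)) \<le> fst (\<pi> (0, s2))" if "s1 \<le> s2" "s2 < N ! 0" for s1 s2
    using pi_edge0(1) that lap_edge_mono[OF lap0_mono[OF that]] by simp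
  have range: "k \<le> fst (\<pi> (0, s)) \<and> fst (\<pi> (0, s)) \<le> m" if "s < N ! 0" for s
    using mono[of 0 s] pi_fst_00 pi_edge0(1) lap_edge_lap0_le_m that by simp
  show ?thesis
    unfolding star_data_conditions_def
  proof (intro conjI allI impI ballI)
    show "0 \<in> (if gB then B else A)" "fst (\<pi> (0, 0)) = k" by (fact gamma, fact pi_fst_00)
  qed (use edges C_target range mono same_target_B_or_C_then_B same_target_A_rev
      same_target_B_pres in auto)
qed

end

section \<open>Sufficiency: construction of the positions\<close>

locale star_data = star_params +
  fixes k :: nat and gB :: bool and N :: "nat list" and \<pi> :: "nat \<times> nat \<Rightarrow> nat \<times> nat"
    and A B C :: "nat set" and c :: nat
  assumes in_D: "inD n (N, \<pi>, (A, B, C))" and conditions: "star_data_conditions m n k gB N \<pi> A B C"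
    and k_less_m: "k < m" and gB_if_k0: "k = 0 \<longrightarrow> gB" and C_eq: "C = {c}"
begin

abbreviation L :: "(nat \<times> nat) set" where "L \<equiv> Lset N"

lemma length_N: "length N = n" using in_D by (simp add: inD_def)

lemma N_pos: "r < n \<Longrightarrow> 0 < N ! r" using in_D by (simp add: inD_def)

lemma pi_permutes: "\<pi> permutes L" using in_D by (simp add: inD_def)

lemma pi_reach: "x \<in> L \<Longrightarrow> y \<in> L \<Longrightarrow> \<exists>k. (\<pi> ^^ k) x = y" using in_D by (simp add: inD_def)

lemma ABC_partition: "A \<union> B \<union> C = {..<N ! 0}" "A \<inter> B = {}" "A \<inter> C = {}" "B \<inter> C = {}"
  using in_D by (simp_all add: inD_def)

lemma mem_L: "(r, s) \<in> L \<longleftrightarrow> r < n \<and> s < N ! r"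
  by (simp add: Lset_def length_N)

lemma finite_L: "finite L"
proof -
  have "L = (SIGMA r:{..<n}. {..<N ! r})" by (auto simp: Lset_def length_N)
  then show ?thesis by simp
qed

lemma pi_in_L: "x \<in> L \<Longrightarrow> \<pi> x \<in> L" using permutes_in_image[OF pi_permutes] by simp

lemma inj_pi: "inj \<pi>" using permutes_inj[OF pi_permutes] .

lemma pi_notin_L: "x \<notin> L \<Longrightarrow> \<pi> x = x" using permutes_not_in[OF pi_permutes] .

lemma funpow_pi_in_L: "x \<in> L \<Longrightarrow> (\<pi> ^^ i) x \<in> L" by (rule funpow_closed[OF pi_in_L])

lemma pi_bounds: "r < n \<Longrightarrow> s < N ! r \<Longrightarrow> fst (\<pi> (r, s)) < n \<and> snd (\<pi> (r, s)) < N ! fst (\<pi> (r, s))"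
  using pi_in_L[of "(r, s)"] mem_L by (metis prod.collapse)

lemma n_pos: "0 < n" using n_ge_2 by simp

lemma N0_pos: "0 < N ! 0" using N_pos n_pos .

lemma L00: "(0, 0) \<in> L" using mem_L n_pos N0_pos by simp

lemmas conds = conditions[unfolded star_data_conditions_def]

lemma pi_fst_shift: "0 < r \<Longrightarrow> r < n \<Longrightarrow> s < N ! r \<Longrightarrow> fst (\<pi> (r, s)) = (r + m) mod n"
  using conds by auto

lemma pi_snd_strict_mono:
  "0 < r \<Longrightarrow> r < n \<Longrightarrow> s1 < s2 \<Longrightarrow> s2 < N ! r \<Longrightarrow> snd (\<pi> (r, s1)) < snd (\<pi> (r, s2))"
  using conds by auto

lemma pi_snd_first: "0 < r \<Longrightarrow> r < n \<Longrightarrow> snd (\<pi> (r, 0)) = 0"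
  using conds by auto

lemma zero_in_gamma: "0 \<in> (if gB then B else A)"
  using conds by auto

lemma pi_fst_00: "fst (\<pi> (0, 0)) = k"
  using conds by auto

lemma pi_c: "\<pi> (0, c) = (m, 0)"
  using conds C_eq by auto

lemma pi_fst_range: "s < N ! 0 \<Longrightarrow> k \<le> fst (\<pi> (0, s)) \<and> fst (\<pi> (0, s)) \<le> m"
  using conds by auto

lemma pi_fst_mono: "s1 \<le> s2 \<Longrightarrow> s2 < N ! 0 \<Longrightarrow> fst (\<pi> (0, s1)) \<le> fst (\<pi> (0, s2))"
  using conds by auto

lemma same_target_B:
  "s1 < s2 \<Longrightarrow> s2 < N ! 0 \<Longrightarrow> fst (\<pi> (0, s1)) = fst (\<pi> (0, s2)) \<Longrightarrow> s1 \<in> B \<union> C \<Longrightarrow> s2 \<in> B"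
  using conds by auto

lemma same_target_A_rev:
  "s1 < s2 \<Longrightarrow> s2 < N ! 0 \<Longrightarrow> fst (\<pi> (0, s1)) = fst (\<pi> (0, s2)) \<Longrightarrow> s1 \<in> A \<Longrightarrow> s2 \<in> A \<Longrightarrow>
    snd (\<pi> (0, s2)) < snd (\<pi> (0, s1))"
  using conds by auto

lemma same_target_B_pres:
  "s1 < s2 \<Longrightarrow> s2 < N ! 0 \<Longrightarrow> fst (\<pi> (0, s1)) = fst (\<pi> (0, s2)) \<Longrightarrow> s1 \<in> B \<Longrightarrow> s2 \<in> B \<Longrightarrow>
    snd (\<pi> (0, s1)) < snd (\<pi> (0, s2))"
  using conds by auto

lemma c_less_N0: "c < N ! 0"
  using ABC_partition(1) C_eq by auto

lemma c_ne_0: "c \<noteq> 0"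
proof
  assume "c = 0"
  then have "fst (\<pi> (0, 0)) = m" using pi_c by simp
  then show False using pi_fst_00 k_less_m by simp
qed

lemma point_cases:
  "s < N ! 0 \<Longrightarrow> (s \<in> A \<and> s \<notin> B \<and> s \<noteq> c) \<or> (s \<in> B \<and> s \<notin> A \<and> s \<noteq> c) \<or> (s = c \<and> s \<notin> A \<and> s \<notin> B)"
  using ABC_partition C_eq by auto

lemma A_target_pos:
  assumes "s \<in> A"
  shows "0 < fst (\<pi> (0, s))"
proof (rule ccontr)
  assume target0: "\<not> 0 < fst (\<pi> (0, s))"
  have s: "s < N ! 0" using assms ABC_partition(1) by auto
  then have "k = 0" using pi_fst_range[OF s] target0 by simp
  then have B0: "0 \<in> B" using zero_in_gamma gB_if_k0 by simp
  then have "s \<noteq> 0" using assms ABC_partition(2) by auto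
  then have "s \<in> B" using same_target_B[of 0 s] s B0 target0 pi_fst_00 \<open>k = 0\<close> by simp
  then show False using assms ABC_partition(2) by auto
qed

lemma pi_snd_pos_if_target_m:
  assumes "s < N ! 0" "s \<noteq> c" "fst (\<pi> (0, s)) = m"
  shows "0 < snd (\<pi> (0, s))"
proof (rule ccontr)
  assume "\<not> 0 < snd (\<pi> (0, s))"
  then have "\<pi> (0, s) = \<pi> (0, c)" using assms(3) pi_c by (simp add: prod_eq_iff)
  then show False using inj_pi assms(2) by (auto dest: injD)
qed

text \<open>For the fold point \<open>c\<close> either
  lap onto \<open>e\<^sub>m\<close> would do; the one of parity opposite to \<open>c\<close> is taken because this makes
  the twin count odd (\<open>odd_twin_count\<close>).\<close>

definition lap_index :: "nat \<Rightarrow> nat" where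
  "lap_index s = (if s = c then (if odd c then 2*m else 2*m - 1)
     else if s \<in> B then 2 * fst (\<pi> (0, s)) else 2 * fst (\<pi> (0, s)) - 1)"

lemma lap_edge_lap_index: "s < N ! 0 \<Longrightarrow> lap_edge (lap_index s) = fst (\<pi> (0, s))"
  using point_cases[of s] A_target_pos[of s] pi_c m_pos
  by (auto simp: lap_index_def lap_edge_def)

lemma lap_index_le: "s < N ! 0 \<Longrightarrow> lap_index s \<le> 2*m"
  using pi_fst_range[of s] by (auto simp: lap_index_def)

lemma even_lap_index_iff: "s < N ! 0 \<Longrightarrow> s \<noteq> c \<Longrightarrow> even (lap_index s) \<longleftrightarrow> s \<in> B"
  using A_target_pos point_cases by (auto simp: lap_index_def)

lemma lap_index_0_less: "lap_index 0 < 2*m"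
  using c_ne_0 pi_fst_00 k_less_m by (auto simp: lap_index_def)

lemma lap_index_mono:
  assumes "s1 \<le> s2" "s2 < N ! 0"
  shows "lap_index s1 \<le> lap_index s2"
proof (rule ccontr)
  assume "\<not> ?thesis"
  then have gt: "lap_index s2 < lap_index s1" and s12: "s1 < s2" using assms(1) by (auto simp: le_less)
  have s1: "s1 < N ! 0" using assms by simp
  have "fst (\<pi> (0, s1)) \<le> fst (\<pi> (0, s2))" using pi_fst_mono assms by blast
  then have "lap_edge (lap_index s1) = lap_edge (lap_index s2)"
    using lap_edge_mono[OF less_imp_le[OF gt]] lap_edge_lap_index s1 assms(2) by simp
  then have parity: "even (lap_index s1)" "odd (lap_index s2)" using lap_edge_eq_gt gt by blast+
  have same: "fst (\<pi> (0, s1)) = fst (\<pi> (0, s2))"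
    using \<open>lap_edge (lap_index s1) = _\<close> lap_edge_lap_index s1 assms(2) by simp
  have "s1 \<in> B \<union> C" using even_lap_index_iff[OF s1] parity C_eq by (cases "s1 = c") auto
  then have "s2 \<in> B" using same_target_B[OF s12 assms(2) same] by simp
  moreover have "s2 \<noteq> c" using calculation C_eq ABC_partition(4) by auto
  ultimately show False using even_lap_index_iff[OF assms(2)] parity by simp
qed

lemma same_lap_pi_snd_order:
  assumes s: "s1 < s2" "s2 < N ! 0" and lap: "lap_index s1 = lap_index s2"
  shows "even (lap_index s1) \<Longrightarrow> snd (\<pi> (0, s1)) < snd (\<pi> (0, s2))"
    and "odd (lap_index s1) \<Longrightarrow> snd (\<pi> (0, s2)) < snd (\<pi> (0, s1))"
proof -
  have s1: "s1 < N ! 0" using s by simp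
  have same: "fst (\<pi> (0, s1)) = fst (\<pi> (0, s2))"
    using lap_edge_lap_index[OF s1] lap_edge_lap_index[OF s(2)] lap by simp
  have s2c: "s2 \<noteq> c" if "s1 \<in> B \<union> C"
    using same_target_B[OF s same that] C_eq ABC_partition(4) by auto
  show "even (lap_index s1) \<Longrightarrow> snd (\<pi> (0, s1)) < snd (\<pi> (0, s2))"
  proof -
    assume ev: "even (lap_index s1)"
    then have "s1 \<in> B \<union> C" using even_lap_index_iff[OF s1] C_eq by (cases "s1 = c") auto
    then have s2B: "s2 \<in> B" and "s2 \<noteq> c" using same_target_B[OF s same] s2c by auto
    show ?thesis
    proof (cases "s1 = c")
      case True
      then show ?thesis using pi_snd_pos_if_target_m[OF s(2) \<open>s2 \<noteq> c\<close>] same pi_c by simp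
    next
      case False
      then have "s1 \<in> B" using \<open>s1 \<in> B \<union> C\<close> C_eq by simp
      then show ?thesis using same_target_B_pres[OF s same _ s2B] by simp
    qed
  qed
  show "odd (lap_index s1) \<Longrightarrow> snd (\<pi> (0, s2)) < snd (\<pi> (0, s1))"
  proof -
    assume od: "odd (lap_index s1)"
    have "s1 \<noteq> c"
    proof
      assume "s1 = c"
      then have "s2 \<in> B" "s2 \<noteq> c" using same_target_B[OF s same] s2c C_eq by auto
      then show False using even_lap_index_iff[OF s(2)] od lap by simp
    qed
    then have s1A: "s1 \<in> A" using even_lap_index_iff[OF s1] od point_cases[OF s1] by auto
    show ?thesis
    proof (cases "s2 = c")
      case True
      then show ?thesis using pi_snd_pos_if_target_m[OF s1 \<open>s1 \<noteq> c\<close>] same pi_c by simp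
    next
      case False
      then have "s2 \<in> A" using even_lap_index_iff[OF s(2)] od lap point_cases[OF s(2)] by auto
      then show ?thesis using same_target_A_rev[OF s same s1A] by simp
    qed
  qed
qed

text \<open>The parameters of the orbit to be built form the fixed point of \<open>pullback\<close>, which
  pulls parameters back along the inverse branches of \<open>f\<close>; these contract by the factor
  \<open>2m+1\<close> on \<open>e\<^sub>0\<close> and are isometries elsewhere.\<close>

definition branch :: "nat \<times> nat \<Rightarrow> real \<Rightarrow> real" where
  "branch l y = (if fst l = 0 then lap_inv m (lap_index (snd l)) y else y)"

definition pullback :: "(nat \<times> nat \<Rightarrow> real) \<Rightarrow> nat \<times> nat \<Rightarrow> real" where
  "pullback x = (\<lambda>l. if l \<in> L then branch l (x (\<pi> l)) else 0)"

definition admissible :: "(nat \<times> nat \<Rightarrow> real) \<Rightarrow> bool" where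
  "admissible x \<longleftrightarrow> (\<forall>l\<in>L. 0 \<le> x l \<and> x l \<le> 1) \<and>
     (\<forall>r s1 s2. r < n \<and> s1 \<le> s2 \<and> s2 < N ! r \<longrightarrow> x (r, s1) \<le> x (r, s2)) \<and>
     (\<forall>s < N ! 0. real (lap_index s) / real (2*m+1) \<le> x (0, s) \<and>
        x (0, s) \<le> (real (lap_index s) + 1) / real (2*m+1))"

lemma admissible_bounds: "admissible x \<Longrightarrow> l \<in> L \<Longrightarrow> 0 \<le> x l \<and> x l \<le> 1"
  and admissible_mono: "admissible x \<Longrightarrow> r < n \<Longrightarrow> s1 \<le> s2 \<Longrightarrow> s2 < N ! r \<Longrightarrow> x (r, s1) \<le> x (r, s2)"
  and admissible_lap: "admissible x \<Longrightarrow> s < N ! 0 \<Longrightarrow>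
    real (lap_index s) / real (2*m+1) \<le> x (0, s) \<and> x (0, s) \<le> (real (lap_index s) + 1) / real (2*m+1)"
  by (simp_all add: admissible_def)

lemma pullback_edge0: "s < N ! 0 \<Longrightarrow> pullback x (0, s) = lap_inv m (lap_index s) (x (\<pi> (0, s)))"
  using mem_L n_pos by (simp add: pullback_def branch_def)

lemma pullback_edge: "0 < r \<Longrightarrow> r < n \<Longrightarrow> s < N ! r \<Longrightarrow> pullback x (r, s) = x (\<pi> (r, s))"
  using mem_L by (simp add: pullback_def branch_def)

lemma admissible_image_bounds: "admissible x \<Longrightarrow> s < N ! 0 \<Longrightarrow> 0 \<le> x (\<pi> (0, s)) \<and> x (\<pi> (0, s)) \<le> 1"
  using admissible_bounds pi_in_L mem_L n_pos by blast

lemma admissible_mono_same_target: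
  assumes "admissible x" "s1 < N ! 0" "s2 < N ! 0" "fst (\<pi> (0, s1)) = fst (\<pi> (0, s2))"
    "snd (\<pi> (0, s1)) \<le> snd (\<pi> (0, s2))"
  shows "x (\<pi> (0, s1)) \<le> x (\<pi> (0, s2))"
  using admissible_mono[OF assms(1), of "fst (\<pi> (0, s1))" "snd (\<pi> (0, s1))" "snd (\<pi> (0, s2))"]
    pi_bounds[OF n_pos assms(3)] assms(4,5)
  by (metis prod.collapse)

lemma pullback_mono_edge0:
  assumes X: "admissible x" and s: "s1 < s2" "s2 < N ! 0"
  shows "pullback x (0, s1) \<le> pullback x (0, s2)"
proof -
  have s1: "s1 < N ! 0" using s by simp
  note y1 = admissible_image_bounds[OF X s1] and y2 = admissible_image_bounds[OF X s(2)]
  show ?thesis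
  proof (cases "lap_index s1 < lap_index s2")
    case True
    have "pullback x (0, s1) \<le> (real (lap_index s1) + 1) / real (2*m+1)"
      using pullback_edge0[OF s1] lap_inv_bounds y1 by simp
    also have "\<dots> \<le> real (lap_index s2) / real (2*m+1)" using True by (simp add: divide_right_mono)
    also have "\<dots> \<le> pullback x (0, s2)" using pullback_edge0[OF s(2)] lap_inv_bounds y2 by simp
    finally show ?thesis .
  next
    case False
    then have lap: "lap_index s1 = lap_index s2" using lap_index_mono[of s1 s2] s by simp
    have same: "fst (\<pi> (0, s1)) = fst (\<pi> (0, s2))"
      using lap_edge_lap_index[OF s1] lap_edge_lap_index[OF s(2)] lap by simp
    note order = same_lap_pi_snd_order[OF s lap]
    show ?thesis
    proof (cases "even (lap_index s1)")
      case True
      then have "x (\<pi> (0, s1)) \<le> x (\<pi> (0, s2))"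
        using admissible_mono_same_target[OF X s1 s(2) same] order(1) by simp
      then show ?thesis using pullback_edge0[OF s1] pullback_edge0[OF s(2)] lap lap_inv_mono True by simp
    next
      case False
      then have "x (\<pi> (0, s2)) \<le> x (\<pi> (0, s1))"
        using admissible_mono_same_target[OF X s(2) s1 same[symmetric]] order(2) by simp
      then show ?thesis
        using pullback_edge0[OF s1] pullback_edge0[OF s(2)] lap lap_inv_antimono False by simp
    qed
  qed
qed

lemma lap_index_upper_le_1: "s < N ! 0 \<Longrightarrow> (real (lap_index s) + 1) / real (2*m+1) \<le> 1"
  using lap_index_le[of s] by (simp add: field_simps)

lemma pullback_mono_edge:
  assumes X: "admissible x" and r: "0 < r" "r < n" and s: "s1 < s2" "s2 < N ! r"
  shows "pullback x (r, s1) \<le> pullback x (r, s2)"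
proof -
  let ?r' = "(r + m) mod n"
  have s1: "s1 < N ! r" using s by simp
  have "\<pi> (r, s1) = (?r', snd (\<pi> (r, s1)))" "\<pi> (r, s2) = (?r', snd (\<pi> (r, s2)))"
    using pi_fst_shift[OF r s1] pi_fst_shift[OF r s(2)] by (metis prod.collapse)+
  moreover have "snd (\<pi> (r, s1)) \<le> snd (\<pi> (r, s2))" "snd (\<pi> (r, s2)) < N ! ?r'"
    using pi_snd_strict_mono[OF r s] pi_bounds[OF r(2) s(2)] pi_fst_shift[OF r s(2)] by simp_all
  ultimately have "x (\<pi> (r, s1)) \<le> x (\<pi> (r, s2))"
    using admissible_mono[OF X, of ?r'] n_pos by (metis mod_less_divisor)
  then show ?thesis using pullback_edge[OF r s1] pullback_edge[OF r s(2)] by simp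
qed

lemma pullback_admissible:
  assumes X: "admissible x"
  shows "admissible (pullback x)"
proof -
  have "0 \<le> pullback x l \<and> pullback x l \<le> 1" if l: "l \<in> L" for l
  proof (cases "fst l = 0")
    case True
    then have s: "snd l < N ! 0" and l0: "l = (0, snd l)" using l mem_L by (metis prod.collapse)+
    note b = lap_inv_bounds[OF admissible_image_bounds[OF X s, THEN conjunct1]
        admissible_image_bounds[OF X s, THEN conjunct2], where J = "lap_index (snd l)" and m = m]
    have "0 \<le> real (lap_index (snd l)) / real (2*m+1)" by simp
    then show ?thesis
      using b lap_index_upper_le_1[OF s] pullback_edge0[OF s] l0 by (metis order_trans)
  next
    case False
    then show ?thesis using admissible_bounds[OF X pi_in_L[OF l]] l by (simp add: pullback_def branch_def)
  qed
  moreover have "pullback x (r, s1) \<le> pullback x (r, s2)" if "r < n" "s1 \<le> s2" "s2 < N ! r" for r s1 s2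
    using that pullback_mono_edge0[OF X] pullback_mono_edge[OF X] by (cases "s1 = s2"; cases "r = 0") auto
  moreover have "real (lap_index s) / real (2*m+1) \<le> pullback x (0, s) \<and>
      pullback x (0, s) \<le> (real (lap_index s) + 1) / real (2*m+1)" if "s < N ! 0" for s
    using lap_inv_bounds admissible_image_bounds[OF X that] pullback_edge0[OF that] by simp
  ultimately show ?thesis by (simp add: admissible_def)
qed

lemma admissible_start: "admissible (\<lambda>l. if fst l = 0 then real (lap_index (snd l)) / real (2*m+1) else 0)"
proof -
  have "real (lap_index s) / real (2*m+1) \<le> 1" if "s < N ! 0" for s
    using lap_index_le[OF that] by (simp add: field_simps)
  then show ?thesis
    using lap_index_mono mem_L by (auto simp: admissible_def divide_right_mono)
qed

definition sup_dist :: "(nat \<times> nat \<Rightarrow> real) \<Rightarrow> (nat \<times> nat \<Rightarrow> real) \<Rightarrow> real" where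
  "sup_dist u v = Max ((\<lambda>l. \<bar>u l - v l\<bar>) ` L)"

lemma sup_dist_ge: "l \<in> L \<Longrightarrow> \<bar>u l - v l\<bar> \<le> sup_dist u v"
  unfolding sup_dist_def using finite_L by (intro Max_ge) auto

lemma sup_dist_le: "(\<And>l. l \<in> L \<Longrightarrow> \<bar>u l - v l\<bar> \<le> b) \<Longrightarrow> sup_dist u v \<le> b"
  unfolding sup_dist_def using finite_L L00 by (subst Max_le_iff) auto

lemma abs_pullback_diff: "l \<in> L \<Longrightarrow> \<bar>pullback u l - pullback v l\<bar> =
    (if fst l = 0 then \<bar>u (\<pi> l) - v (\<pi> l)\<bar> / real (2*m+1) else \<bar>u (\<pi> l) - v (\<pi> l)\<bar>)"
  by (simp add: pullback_def branch_def abs_lap_inv_diff)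

lemma abs_funpow_pullback_diff:
  "\<forall>l\<in>L. \<bar>(pullback ^^ i) u l - (pullback ^^ i) v l\<bar> \<le> sup_dist u v \<and>
     ((\<exists>t<i. fst ((\<pi> ^^ t) l) = 0) \<longrightarrow>
        \<bar>(pullback ^^ i) u l - (pullback ^^ i) v l\<bar> \<le> sup_dist u v / real (2*m+1))"
proof (induction i)
  case 0
  then show ?case using sup_dist_ge by simp
next
  case (Suc i)
  show ?case
  proof
    fix l assume l: "l \<in> L"
    define d where "d = \<bar>(pullback ^^ i) u (\<pi> l) - (pullback ^^ i) v (\<pi> l)\<bar>"
    have IH: "d \<le> sup_dist u v"
      "(\<exists>t<i. fst ((\<pi> ^^ t) (\<pi> l)) = 0) \<Longrightarrow> d \<le> sup_dist u v / real (2*m+1)"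
      using Suc.IH pi_in_L[OF l] by (auto simp: d_def)
    have eq: "\<bar>(pullback ^^ Suc i) u l - (pullback ^^ Suc i) v l\<bar> =
        (if fst l = 0 then d / real (2*m+1) else d)"
      using abs_pullback_diff[OF l, of "(pullback ^^ i) u" "(pullback ^^ i) v"] by (simp add: d_def)
    have "d * 1 \<le> d * real (2*m+1)" by (rule mult_left_mono) (simp_all add: d_def)
    then have "d / real (2*m+1) \<le> d" by (simp add: divide_le_eq)
    then have le: "\<bar>(pullback ^^ Suc i) u l - (pullback ^^ Suc i) v l\<bar> \<le> sup_dist u v"
      using eq IH(1) by (simp split: if_splits)
    have "\<bar>(pullback ^^ Suc i) u l - (pullback ^^ Suc i) v l\<bar> \<le> sup_dist u v / real (2*m+1)"
      if visit: "\<exists>t<Suc i. fst ((\<pi> ^^ t) l) = 0"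
    proof (cases "fst l = 0")
      case True
      then show ?thesis using eq IH(1) by (simp add: divide_right_mono)
    next
      case False
      obtain t where t: "t < Suc i" "fst ((\<pi> ^^ t) l) = 0" using visit by blast
      then obtain t' where t': "t = Suc t'" using False by (cases t) auto
      have "(\<pi> ^^ t) l = (\<pi> ^^ t') (\<pi> l)" unfolding t' by (simp only: funpow_Suc_right comp_apply)
      then have "\<exists>t<i. fst ((\<pi> ^^ t) (\<pi> l)) = 0" using t t' by auto
      then show ?thesis using eq IH(2) False by simp
    qed
    with le show "\<bar>(pullback ^^ Suc i) u l - (pullback ^^ Suc i) v l\<bar> \<le> sup_dist u v \<and>
      ((\<exists>t<Suc i. fst ((\<pi> ^^ t) l) = 0) \<longrightarrow>
        \<bar>(pullback ^^ Suc i) u l - (pullback ^^ Suc i) v l\<bar> \<le> sup_dist u v / real (2*m+1))"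
      by blast
  qed
qed

lemma edge0_visit_bound: "\<exists>K. \<forall>l\<in>L. \<exists>t<K. fst ((\<pi> ^^ t) l) = 0"
proof -
  have "\<forall>l\<in>L. \<exists>t. (\<pi> ^^ t) l = (0, 0)" using pi_reach L00 by blast
  then obtain f where f: "\<forall>l\<in>L. (\<pi> ^^ f l) l = (0, 0)" by metis
  have "\<forall>l\<in>L. f l < Suc (Max (f ` L))" using finite_L by (simp add: le_imp_less_Suc)
  then show ?thesis using f by (intro exI[of _ "Suc (Max (f ` L))"]) force
qed

lemma sup_dist_funpow_pullback:
  assumes K: "\<forall>l\<in>L. \<exists>t<K. fst ((\<pi> ^^ t) l) = 0"
  shows "sup_dist ((pullback ^^ (j*K)) u) ((pullback ^^ (j*K)) v) \<le> sup_dist u v * (1 / real (2*m+1)) ^ j"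
proof (induction j)
  case (Suc j)
  let ?U = "(pullback ^^ (j*K)) u" and ?V = "(pullback ^^ (j*K)) v"
  have "sup_dist ((pullback ^^ K) ?U) ((pullback ^^ K) ?V) \<le> sup_dist ?U ?V / real (2*m+1)"
    using abs_funpow_pullback_diff[of K ?U ?V] K by (intro sup_dist_le) blast
  also have "\<dots> \<le> (sup_dist u v * (1 / real (2*m+1)) ^ j) / real (2*m+1)"
    by (rule divide_right_mono[OF Suc.IH]) simp
  finally show ?case by (simp add: funpow_add ac_simps)
qed simp

lemma tendsto_branch: "X \<longlonglongrightarrow> y \<Longrightarrow> (\<lambda>j. branch l (X j)) \<longlonglongrightarrow> branch l y"
proof -
  assume X: "X \<longlonglongrightarrow> y"
  have "real (2*m+1) \<noteq> 0" by simp
  then show ?thesis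
    using X unfolding branch_def lap_inv_def by (cases "even (lap_index (snd l))") (auto intro!: tendsto_intros)
qed

lemma admissible_limit:
  assumes adm: "\<And>j. admissible (X j)" and lim: "\<And>l. l \<in> L \<Longrightarrow> (\<lambda>j. X j l) \<longlonglongrightarrow> x l"
  shows "admissible x"
proof -
  have "0 \<le> x l \<and> x l \<le> 1" if "l \<in> L" for l
    using lim[OF that] admissible_bounds[OF adm that]
    by (auto intro: LIMSEQ_le_const LIMSEQ_le_const2)
  moreover have "x (r, s1) \<le> x (r, s2)" if "r < n" "s1 \<le> s2" "s2 < N ! r" for r s1 s2
    using that lim mem_L admissible_mono[OF adm that] by (intro LIMSEQ_le[of "\<lambda>j. X j (r, s1)" _ "\<lambda>j. X j (r, s2)"]) auto
  moreover have "real (lap_index s) / real (2*m+1) \<le> x (0, s) \<and>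
      x (0, s) \<le> (real (lap_index s) + 1) / real (2*m+1)" if "s < N ! 0" for s
    using lim[of "(0, s)"] that mem_L n_pos admissible_lap[OF adm that]
    by (auto intro: LIMSEQ_le_const LIMSEQ_le_const2)
  ultimately show ?thesis by (simp add: admissible_def)
qed

lemma admissible_fixed_point_exists: "\<exists>x. admissible x \<and> (\<forall>l\<in>L. x l = branch l (x (\<pi> l)))"
proof -
  obtain K where K: "\<forall>l\<in>L. \<exists>t<K. fst ((\<pi> ^^ t) l) = 0" using edge0_visit_bound by blast
  define x0 :: "nat \<times> nat \<Rightarrow> real"
    where "x0 = (\<lambda>l. if fst l = 0 then real (lap_index (snd l)) / real (2*m+1) else 0)"
  define y where "y j = (pullback ^^ (j*K)) x0" for j
  define q :: real where "q = 1 / real (2*m+1)"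
  have q: "0 \<le> q" "q < 1" using m_pos by (simp_all add: q_def)
  have "admissible ((pullback ^^ i) x0)" for i
    by (induction i) (auto simp: x0_def admissible_start pullback_admissible)
  then have adm: "admissible (y j)" for j by (simp add: y_def)
  have geometric: "\<bar>(pullback ^^ (j*K)) u l - (pullback ^^ (j*K)) v l\<bar> \<le> sup_dist u v * q ^ j"
    if "l \<in> L" for u v j l
  proof -
    have "\<bar>(pullback ^^ (j*K)) u l - (pullback ^^ (j*K)) v l\<bar> \<le>
        sup_dist ((pullback ^^ (j*K)) u) ((pullback ^^ (j*K)) v)"
      by (rule sup_dist_ge[OF that])
    also have "\<dots> \<le> sup_dist u v * q ^ j" using sup_dist_funpow_pullback[OF K] by (simp add: q_def)
    finally show ?thesis .
  qed
  have "y (Suc j) = (pullback ^^ (j*K)) ((pullback ^^ K) x0)" for j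
  proof -
    have "Suc j * K = j * K + K" by simp
    then show ?thesis by (simp only: y_def funpow_add comp_apply)
  qed
  then have "convergent (\<lambda>j. y j l)" if "l \<in> L" for l
    using geometric[OF that] q by (intro convergent_if_geometric_steps) (auto simp: y_def)
  then have "\<forall>l\<in>L. \<exists>z. (\<lambda>j. y j l) \<longlonglongrightarrow> z" unfolding convergent_def by blast
  from bchoice[OF this] obtain x where "\<forall>l\<in>L. (\<lambda>j. y j l) \<longlonglongrightarrow> x l" by blast
  then have lim: "\<And>l. l \<in> L \<Longrightarrow> (\<lambda>j. y j l) \<longlonglongrightarrow> x l" by blast
  have "x l = branch l (x (\<pi> l))" if l: "l \<in> L" for l
  proof -
    have "pullback (y j) = (pullback ^^ (j*K)) (pullback x0)" for j
      by (simp add: y_def funpow_swap1)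
    then have "\<forall>j. norm (pullback (y j) l - y j l) \<le> norm (q ^ j) * sup_dist (pullback x0) x0"
      using geometric[OF l] q by (simp add: y_def mult.commute)
    then have bound: "eventually (\<lambda>j. norm (pullback (y j) l - y j l) \<le>
        norm (q ^ j) * sup_dist (pullback x0) x0) sequentially"
      by (rule always_eventually)
    have "(\<lambda>j. q ^ j) \<longlonglongrightarrow> 0" using q by (intro LIMSEQ_power_zero) simp
    then have "(\<lambda>j. pullback (y j) l - y j l) \<longlonglongrightarrow> 0" by (rule tendsto_0_le[OF _ bound])
    then have "(\<lambda>j. pullback (y j) l) \<longlonglongrightarrow> x l" by (rule Lim_transform[OF lim[OF l]])
    moreover have "(\<lambda>j. pullback (y j) l) \<longlonglongrightarrow> branch l (x (\<pi> l))"
      using tendsto_branch[OF lim[OF pi_in_L[OF l]]] l by (simp add: pullback_def)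
    ultimately show ?thesis by (rule LIMSEQ_unique)
  qed
  then show ?thesis using admissible_limit[OF adm lim] by blast
qed

definition param :: "nat \<times> nat \<Rightarrow> real" where
  "param = (SOME x. admissible x \<and> (\<forall>l\<in>L. x l = branch l (x (\<pi> l))))"

lemma param_admissible: "admissible param"
  and param_fixed: "l \<in> L \<Longrightarrow> param l = branch l (param (\<pi> l))"
  using someI_ex[OF admissible_fixed_point_exists] by (simp_all add: param_def)

lemma param_bounds: "l \<in> L \<Longrightarrow> 0 \<le> param l \<and> param l \<le> 1"
  using admissible_bounds[OF param_admissible] .

lemma param_mono: "r < n \<Longrightarrow> s1 \<le> s2 \<Longrightarrow> s2 < N ! r \<Longrightarrow> param (r, s1) \<le> param (r, s2)"
  using admissible_mono[OF param_admissible] .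

lemma param_edge0: "s < N ! 0 \<Longrightarrow> param (0, s) = lap_inv m (lap_index s) (param (\<pi> (0, s)))"
  using param_fixed[of "(0, s)"] mem_L n_pos by (simp add: branch_def)

lemma param_edge: "0 < r \<Longrightarrow> r < n \<Longrightarrow> s < N ! r \<Longrightarrow> param (r, s) = param (\<pi> (r, s))"
  using param_fixed[of "(r, s)"] mem_L by (simp add: branch_def)

lemma lap_param_edge0: "s < N ! 0 \<Longrightarrow> lap m (lap_index s) (param (0, s)) = param (\<pi> (0, s))"
  using param_edge0 by simp

definition point :: "nat \<times> nat \<Rightarrow> gpt" where "point l = mkpt (fst l) (param l)"

lemma fmap_point:
  assumes l: "l \<in> L"
  shows "fmap m n (point l) = point (\<pi> l)"
proof -
  obtain r s where rs: "l = (r, s)" and r: "r < n" "s < N ! r" using l mem_L by (cases l) auto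
  show ?thesis
  proof (cases "r = 0")
    case True
    then have s: "s < N ! 0" using r by simp
    define J where "J = lap_index s"
    note y = admissible_image_bounds[OF param_admissible s]
    note b = lap_inv_bounds[OF y[THEN conjunct1] y[THEN conjunct2], where J = J and m = m]
    have "real J \<le> real (2*m+1) * param (0, s)" "real (2*m+1) * param (0, s) \<le> real J + 1"
      using b param_edge0[OF s] by (simp_all add: J_def field_simps)
    then have "fmap m n (mkpt 0 (param (0, s))) = mkpt (lap_edge J) (lap m J (param (0, s)))"
      using fmap_mkpt_edge0_lap lap_index_le[OF s] param_bounds[of "(0, s)"] mem_L s n_pos
      unfolding J_def by blast
    also have "\<dots> = mkpt (fst (\<pi> (0, s))) (param (\<pi> (0, s)))"
      using lap_edge_lap_index[OF s] lap_param_edge0[OF s] by (simp add: J_def)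
    finally show ?thesis using True rs by (simp add: point_def)
  next
    case False
    then show ?thesis
      using rs r param_edge[of r s] pi_fst_shift[of r s] by (simp add: point_def mkpt_def)
  qed
qed

lemma funpow_fmap_point: "l \<in> L \<Longrightarrow> (fmap m n ^^ i) (point l) = point ((\<pi> ^^ i) l)"
  by (induction i) (simp_all add: fmap_point funpow_pi_in_L)

lemma param_less_1: "l \<in> L \<Longrightarrow> param l < 1"
proof (rule ccontr)
  assume l: "l \<in> L" and "\<not> param l < 1"
  then have "point l = Vtx" by (simp add: point_def mkpt_def)
  obtain i where i: "(\<pi> ^^ i) l = (0, 0)" using pi_reach[OF l L00] by blast
  have "(fmap m n ^^ j) Vtx = Vtx" for j by (induction j) auto
  then have "point (0, 0) = Vtx" using funpow_fmap_point[OF l, of i] i \<open>point l = Vtx\<close> by simp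
  then have "1 \<le> param (0, 0)" by (simp add: point_def mkpt_def split: if_splits)
  moreover have "param (0, 0) \<le> (real (lap_index 0) + 1) / real (2*m+1)"
    using admissible_lap[OF param_admissible N0_pos] by simp
  moreover have "(real (lap_index 0) + 1) / real (2*m+1) < 1"
    using lap_index_0_less by (simp add: field_simps)
  ultimately show False by simp
qed

lemma point_eq_Pt: "l \<in> L \<Longrightarrow> point l = Pt (fst l) (param l)"
  using param_less_1[of l] by (simp add: point_def mkpt_def)

lemma param_first_nonzero: "r < n \<Longrightarrow> param (r, 0) \<noteq> 0"
proof
  assume r: "r < n" and z: "param (r, 0) = 0"
  let ?S = "{r. r < n \<and> param (r, 0) = 0}"
  have "0 \<in> ?S"
  proof (rule coprime_shift_reaches_0[OF m_pos coprime_m_n])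
    show "r \<in> ?S" "r < n" using r z by simp_all
    fix r assume h: "r \<in> ?S" "0 < r" "r < n"
    have N: "0 < N ! r" using N_pos h by simp
    have "\<pi> (r, 0) = ((r + m) mod n, 0)"
      using pi_fst_shift[OF h(2,3) N] pi_snd_first[OF h(2,3)] by (simp add: prod_eq_iff)
    then show "(r + m) mod n \<in> ?S" using param_edge[OF h(2,3) N] h n_pos by simp
  qed
  then have z0: "point (0, 0) = Pt 0 0" using point_eq_Pt[OF L00] by simp
  have fixed: "(fmap m n ^^ i) (Pt 0 0) = Pt 0 0" for i by (induction i) (auto simp: mkpt_def)
  have l1: "(1, 0) \<in> L" using mem_L n_ge_2 N_pos[of 1] by simp
  obtain i where "(\<pi> ^^ i) (0, 0) = (1, 0)" using pi_reach[OF L00 l1] by blast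
  then have "point (1, 0) = Pt 0 0" using funpow_fmap_point[OF L00, of i] z0 fixed by simp
  then show False using point_eq_Pt[OF l1] by simp
qed

lemma param_pos: "l \<in> L \<Longrightarrow> 0 < param l"
proof -
  assume l: "l \<in> L"
  obtain r s where rs: "l = (r, s)" and r: "r < n" "s < N ! r" using l mem_L by (cases l) auto
  have "param (r, 0) \<le> param (r, s)" using param_mono[OF r(1) _ r(2)] by simp
  moreover have "0 \<le> param (r, 0)" using param_bounds[of "(r, 0)"] mem_L r by simp
  ultimately show ?thesis using param_first_nonzero[OF r(1)] rs by simp
qed

lemma param_edge0_open_lap:
  assumes s: "s < N ! 0"
  shows "real (lap_index s) < real (2*m+1) * param (0, s)"
    "real (2*m+1) * param (0, s) < real (lap_index s) + 1"
proof -
  have l: "(0, s) \<in> L" using s mem_L n_pos by simp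
  have closed: "real (lap_index s) \<le> real (2*m+1) * param (0, s)"
    "real (2*m+1) * param (0, s) \<le> real (lap_index s) + 1"
    using admissible_lap[OF param_admissible s] by (simp_all add: field_simps)
  have no_break: False if brk: "real (2*m+1) * param (0, s) = real J" for J
  proof -
    have t: "0 \<le> param (0, s)" "param (0, s) < 1" using param_bounds[OF l] param_less_1[OF l] by auto
    have "0 < real (2*m+1) * param (0, s)" using param_pos[OF l] by simp
    then have "J \<noteq> 0" using brk by auto
    have "fmap m n (Pt 0 (param (0, s))) = Pt (fst (\<pi> (0, s))) (param (\<pi> (0, s)))"
      using fmap_point[OF l] point_eq_Pt[OF l] point_eq_Pt[OF pi_in_L[OF l]] by simp
    then have "param (\<pi> (0, s)) = 0"
      using fmap_edge0_breakpoint[OF brk t \<open>J \<noteq> 0\<close>] by (auto split: if_splits)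
    then show False using param_pos[OF pi_in_L[OF l]] by simp
  qed
  show "real (lap_index s) < real (2*m+1) * param (0, s)"
    using closed(1) no_break[of "lap_index s"] unfolding less_le by auto
  show "real (2*m+1) * param (0, s) < real (lap_index s) + 1"
    using closed(2) no_break[of "lap_index s + 1"] unfolding less_le by auto
qed

lemma lap_of_param: "s < N ! 0 \<Longrightarrow> lap_of m (param (0, s)) = lap_index s"
  using param_edge0_open_lap by (intro lap_of_eq) (auto intro: less_imp_le)

section \<open>Sufficiency: the constructed points are distinct\<close>

definition twins :: "nat \<times> nat \<Rightarrow> (nat \<times> nat) set" where
  "twins l = {l' \<in> L. fst l' = fst l \<and> param l' = param l}"

lemma twins_subset_L: "twins l \<subseteq> L" by (auto simp: twins_def)

lemma finite_twins: "finite (twins l)" using twins_subset_L finite_L by (rule finite_subset)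

lemma self_in_twins: "l \<in> L \<Longrightarrow> l \<in> twins l" by (simp add: twins_def)

lemma twins_snd_inj: "a \<in> twins l \<Longrightarrow> b \<in> twins l \<Longrightarrow> snd a = snd b \<Longrightarrow> a = b"
  by (auto simp: twins_def prod_eq_iff)

lemma pi_twins_subset:
  assumes l: "l \<in> L"
  shows "\<pi> ` twins l \<subseteq> twins (\<pi> l)"
proof
  fix y assume "y \<in> \<pi> ` twins l"
  then obtain l' where l': "l' \<in> twins l" "y = \<pi> l'" by blast
  have l'L: "l' \<in> L" using l'(1) twins_subset_L by blast
  have "point l' = point l" using l' point_eq_Pt[OF l'L] point_eq_Pt[OF l] by (simp add: twins_def)
  then have "point (\<pi> l') = point (\<pi> l)" using fmap_point[OF l] fmap_point[OF l'L] by metis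
  then show "y \<in> twins (\<pi> l)"
    using point_eq_Pt[OF pi_in_L[OF l]] point_eq_Pt[OF pi_in_L[OF l'L]] pi_in_L[OF l'L] l'
    by (simp add: twins_def)
qed

lemma card_twins_le_funpow: "l \<in> L \<Longrightarrow> card (twins l) \<le> card (twins ((\<pi> ^^ i) l))"
proof (induction i)
  case (Suc i)
  let ?l = "(\<pi> ^^ i) l"
  have "card (twins ?l) = card (\<pi> ` twins ?l)" using inj_pi by (simp add: card_image inj_on_subset)
  also have "\<dots> \<le> card (twins (\<pi> ?l))"
    using pi_twins_subset[OF funpow_pi_in_L[OF Suc.prems]] finite_twins by (rule card_mono[rotated])
  finally show ?case using Suc by simp
qed simp

definition twin_count :: nat where "twin_count = card (twins (0, 0))"

lemma card_twins: "l \<in> L \<Longrightarrow> card (twins l) = twin_count"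
proof -
  assume l: "l \<in> L"
  obtain i where i: "(\<pi> ^^ i) (0, 0) = l" using pi_reach[OF L00 l] by blast
  obtain j where j: "(\<pi> ^^ j) l = (0, 0)" using pi_reach[OF l L00] by blast
  show ?thesis
    using card_twins_le_funpow[OF L00, of i] card_twins_le_funpow[OF l, of j] i j
    by (simp add: twin_count_def)
qed

lemma pi_twins_eq: "l \<in> L \<Longrightarrow> \<pi> ` twins l = twins (\<pi> l)"
proof -
  assume l: "l \<in> L"
  have "card (\<pi> ` twins l) = card (twins (\<pi> l))"
    using inj_pi card_twins[OF l] card_twins[OF pi_in_L[OF l]] by (simp add: card_image inj_on_subset)
  then show ?thesis using card_subset_eq[OF finite_twins pi_twins_subset[OF l]] by simp
qed

lemma twin_count_pos: "0 < twin_count"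
  using self_in_twins[OF L00] finite_twins by (simp add: twin_count_def card_gt_0_iff) blast

definition twin_rank :: "nat \<times> nat \<Rightarrow> nat" where
  "twin_rank l = card {l' \<in> twins l. snd l' < snd l}"

lemma card_twins_above:
  assumes l: "l \<in> L"
  shows "card {l' \<in> twins l. snd l < snd l'} = twin_count - 1 - twin_rank l"
    and "twin_rank l \<le> twin_count - 1"
proof -
  define below where "below = {l' \<in> twins l. snd l' < snd l}"
  define above where "above = {l' \<in> twins l. snd l < snd l'}"
  have split: "twins l = insert l (below \<union> above)"
  proof (intro equalityI subsetI)
    fix a assume a: "a \<in> twins l"
    have "snd a < snd l \<or> snd a = snd l \<or> snd l < snd a" by auto
    then show "a \<in> insert l (below \<union> above)"
      using a twins_snd_inj[OF a self_in_twins[OF l]] by (auto simp: below_def above_def)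
  qed (use self_in_twins[OF l] in \<open>auto simp: below_def above_def\<close>)
  have "finite below" "finite above" "l \<notin> below \<union> above" "below \<inter> above = {}"
    using finite_twins by (auto simp: below_def above_def)
  then have "card (twins l) = Suc (card below + card above)"
    unfolding split by (simp add: card_Un_disjoint card_insert_disjoint)
  then show "card above = twin_count - 1 - twin_rank l" "twin_rank l \<le> twin_count - 1"
    using card_twins[OF l] by (simp_all add: twin_rank_def below_def)
qed

definition twins_pi_pres :: "nat \<times> nat \<Rightarrow> bool" where
  "twins_pi_pres l \<longleftrightarrow> (\<forall>a\<in>twins l. \<forall>b\<in>twins l. snd a < snd b \<longrightarrow> snd (\<pi> a) < snd (\<pi> b))"

definition twins_pi_rev :: "nat \<times> nat \<Rightarrow> bool" where
  "twins_pi_rev l \<longleftrightarrow> (\<forall>a\<in>twins l. \<forall>b\<in>twins l. snd a < snd b \<longrightarrow> snd (\<pi> b) < snd (\<pi> a))"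

lemma twins_below_pi:
  assumes l: "l \<in> L" and iff: "\<And>a. a \<in> twins l \<Longrightarrow> snd (\<pi> a) < snd (\<pi> l) \<longleftrightarrow> Q a"
  shows "card {l'' \<in> twins (\<pi> l). snd l'' < snd (\<pi> l)} = card {a \<in> twins l. Q a}"
proof -
  have "{l'' \<in> twins (\<pi> l). snd l'' < snd (\<pi> l)} = \<pi> ` {a \<in> twins l. Q a}"
    unfolding pi_twins_eq[OF l, symmetric] using iff by auto
  then show ?thesis using inj_pi by (simp add: card_image inj_on_subset)
qed

lemma twin_rank_pi_pres:
  assumes l: "l \<in> L" and pres: "twins_pi_pres l"
  shows "twin_rank (\<pi> l) = twin_rank l"
proof -
  have "snd (\<pi> a) < snd (\<pi> l) \<longleftrightarrow> snd a < snd l" if a: "a \<in> twins l" for a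
  proof (cases "snd a = snd l")
    case True
    then show ?thesis using twins_snd_inj[OF a self_in_twins[OF l]] by simp
  next
    case False
    then show ?thesis using pres a self_in_twins[OF l] unfolding twins_pi_pres_def
      by (meson linorder_neqE_nat order_less_asym)
  qed
  then show ?thesis using twins_below_pi[OF l] by (simp add: twin_rank_def)
qed

lemma twin_rank_pi_rev:
  assumes l: "l \<in> L" and rev: "twins_pi_rev l"
  shows "twin_rank (\<pi> l) = twin_count - 1 - twin_rank l"
proof -
  have "snd (\<pi> a) < snd (\<pi> l) \<longleftrightarrow> snd l < snd a" if a: "a \<in> twins l" for a
  proof (cases "snd a = snd l")
    case True
    then show ?thesis using twins_snd_inj[OF a self_in_twins[OF l]] by simp
  next
    case False
    then show ?thesis using rev a self_in_twins[OF l] unfolding twins_pi_rev_def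
      by (meson linorder_neqE_nat order_less_asym)
  qed
  then show ?thesis using twins_below_pi[OF l] card_twins_above(1)[OF l] by (simp add: twin_rank_def)
qed

lemma twins_edge0:
  assumes "s < N ! 0"
  shows "twins (0, s) = Pair 0 ` {a. a < N ! 0 \<and> param (0, a) = param (0, s)}"
  using assms by (auto simp: twins_def mem_L n_pos)

lemma twins_pi_pres_or_rev:
  assumes l: "l \<in> L"
  shows "twins_pi_pres l \<or> twins_pi_rev l"
proof -
  obtain r s where rs: "l = (r, s)" and r: "r < n" "s < N ! r" using l mem_L by (cases l) auto
  have twin: "a = (r, snd a)" "snd a < N ! r" "param (r, snd a) = param (r, s)" if "a \<in> twins l" for a
    using that rs by (cases a; auto simp: twins_def mem_L)+
  show ?thesis
  proof (cases "r = 0")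
    case False
    have "twins_pi_pres l" unfolding twins_pi_pres_def
    proof (intro ballI impI)
      fix a b assume ab: "a \<in> twins l" "b \<in> twins l" "snd a < snd b"
      have "snd (\<pi> (r, snd a)) < snd (\<pi> (r, snd b))"
        using pi_snd_strict_mono False r(1) ab(3) twin(2)[OF ab(2)] by simp
      then show "snd (\<pi> a) < snd (\<pi> b)" using twin(1)[OF ab(1)] twin(1)[OF ab(2)] by metis
    qed
    then show ?thesis by simp
  next
    case True
    then have s: "s < N ! 0" using r by simp
    have lap: "lap_index (snd a) = lap_index s" if "a \<in> twins l" for a
      using lap_of_param[OF s] lap_of_param[OF twin(2)[OF that, unfolded True]] twin(3)[OF that] True
      by simp
    have order: "(even (lap_index s) \<longrightarrow> snd (\<pi> a) < snd (\<pi> b)) \<and>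
        (odd (lap_index s) \<longrightarrow> snd (\<pi> b) < snd (\<pi> a))"
      if ab: "a \<in> twins l" "b \<in> twins l" "snd a < snd b" for a b
    proof -
      note order = same_lap_pi_snd_order[OF ab(3) twin(2)[OF ab(2), unfolded True]]
      have "(even (lap_index s) \<longrightarrow> snd (\<pi> (0, snd a)) < snd (\<pi> (0, snd b))) \<and>
          (odd (lap_index s) \<longrightarrow> snd (\<pi> (0, snd b)) < snd (\<pi> (0, snd a)))"
        using order lap[OF ab(1)] lap[OF ab(2)] by simp
      then show ?thesis using twin(1)[OF ab(1)] twin(1)[OF ab(2)] True by metis
    qed
    then show ?thesis unfolding twins_pi_pres_def twins_pi_rev_def by blast
  qed
qed

definition twins0 :: "nat \<Rightarrow> nat set" where
  "twins0 s = {a. a < N ! 0 \<and> param (0, a) = param (0, s)}"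

lemma finite_twins0: "finite (twins0 s)" by (simp add: twins0_def)

lemma card_twins0: "s < N ! 0 \<Longrightarrow> card (twins0 s) = twin_count"
  using card_twins[of "(0, s)"] twins_edge0 mem_L n_pos
  by (simp add: twins0_def card_image inj_on_def)

lemma twin_rank_edge0: "s < N ! 0 \<Longrightarrow> twin_rank (0, s) = card {a \<in> twins0 s. a < s}"
proof -
  assume s: "s < N ! 0"
  have "{l' \<in> twins (0, s). snd l' < snd (0, s)} = Pair 0 ` {a \<in> twins0 s. a < s}"
    using twins_edge0[OF s] by (auto simp: twins0_def)
  then show ?thesis by (simp add: twin_rank_def card_image inj_on_def)
qed

lemma card_twins0_above:
  assumes s: "s < N ! 0"
  shows "card {a \<in> twins0 s. s < a} = twin_count - 1 - twin_rank (0, s)"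
proof -
  have "{l' \<in> twins (0, s). snd (0, s) < snd l'} = Pair 0 ` {a \<in> twins0 s. s < a}"
    using twins_edge0[OF s] by (auto simp: twins0_def)
  then show ?thesis using card_twins_above(1)[of "(0, s)"] s mem_L n_pos by (simp add: card_image inj_on_def)
qed

text \<open>On \<open>e\<^sub>0\<close> the twin classes are runs of consecutive labels, because the parameters are
  monotone; so the rank of \<open>(0, s)\<close> in its class is \<open>s mod twin_count\<close>.\<close>

lemma twin_rank_edge0_mod: "s < N ! 0 \<Longrightarrow> twin_rank (0, s) = s mod twin_count"
proof (induction s)
  case 0
  then show ?case using twin_rank_edge0[OF 0] by simp
next
  case (Suc s)
  have sN: "s < N ! 0" using Suc.prems by simp
  note IH = Suc.IH[OF sN]
  show ?case
  proof (cases "twin_rank (0, s) < twin_count - 1")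
    case True
    then have "card {a \<in> twins0 s. s < a} \<noteq> 0" using card_twins0_above[OF sN] by simp
    then have "{a \<in> twins0 s. s < a} \<noteq> {}" by (metis card.empty)
    then obtain b where b: "b \<in> twins0 s" "s < b" by blast
    have "param (0, s) \<le> param (0, Suc s)" "param (0, Suc s) \<le> param (0, b)"
      using param_mono[OF n_pos _ Suc.prems, of s] param_mono[OF n_pos _, of "Suc s" b] b
      by (auto simp: twins0_def)
    then have "twins0 (Suc s) = twins0 s" using b(1) unfolding twins0_def by auto
    moreover have "{a \<in> twins0 s. a < Suc s} = insert s {a \<in> twins0 s. a < s}"
      using sN by (auto simp: twins0_def less_Suc_eq)
    ultimately have "twin_rank (0, Suc s) = Suc (s mod twin_count)"
      using twin_rank_edge0[OF Suc.prems] twin_rank_edge0[OF sN] finite_twins0 IH by simp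
    moreover have "Suc (s mod twin_count) \<noteq> twin_count" using True IH by simp
    ultimately show ?thesis by (simp add: mod_Suc)
  next
    case False
    then have top: "twin_rank (0, s) = twin_count - 1" using card_twins_above(2)[of "(0, s)"] sN mem_L n_pos by simp
    then have "{a \<in> twins0 s. s < a} = {}" using card_twins0_above[OF sN] finite_twins0 by simp
    then have "param (0, Suc s) \<noteq> param (0, s)" using Suc.prems by (auto simp: twins0_def)
    then have lt: "param (0, s) < param (0, Suc s)" using param_mono[OF n_pos _ Suc.prems, of s] by simp
    have "{a \<in> twins0 (Suc s). a < Suc s} = {}"
      using param_mono[OF n_pos _ sN] lt by (force simp: twins0_def less_Suc_eq_le)
    then have "twin_rank (0, Suc s) = 0" using twin_rank_edge0[OF Suc.prems] by simp
    moreover have "Suc (s mod twin_count) = twin_count" using top IH twin_count_pos by simp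
    ultimately show ?thesis by (simp add: mod_Suc)
  qed
qed

lemma twins0_same_target:
  assumes "s < N ! 0" "a \<in> twins0 s"
  shows "a < N ! 0" "lap_index a = lap_index s" "fst (\<pi> (0, a)) = fst (\<pi> (0, s))"
proof -
  show a: "a < N ! 0" using assms(2) by (simp add: twins0_def)
  show lap: "lap_index a = lap_index s"
    using lap_of_param[OF assms(1)] lap_of_param[OF a] assms(2) by (simp add: twins0_def)
  show "fst (\<pi> (0, a)) = fst (\<pi> (0, s))"
    using lap_edge_lap_index[OF a] lap_edge_lap_index[OF assms(1)] lap by simp
qed

text \<open>The class of the fold point \<open>c\<close> starts at \<open>c\<close> if \<open>c\<close> is odd and ends at \<open>c\<close> if \<open>c\<close>
  is even, by the choice of its lap; in both cases the class size divides an odd number.\<close>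

lemma odd_twin_count: "odd twin_count"
proof (cases "odd c")
  case True
  have "{a \<in> twins0 c. a < c} = {}"
  proof (rule ccontr)
    assume "{a \<in> twins0 c. a < c} \<noteq> {}"
    then obtain a where a: "a \<in> twins0 c" "a < c" by blast
    note t = twins0_same_target[OF c_less_N0 a(1)]
    have "even (lap_index a)" using t(2) True by (simp add: lap_index_def)
    then have "a \<in> B" using even_lap_index_iff[OF t(1)] a(2) by simp
    then have "c \<in> B" using same_target_B[OF a(2) c_less_N0 t(3)] by simp
    then show False using C_eq ABC_partition(4) by auto
  qed
  then have "twin_rank (0, c) = 0" using twin_rank_edge0[OF c_less_N0] by (metis card.empty)
  then have "twin_count dvd c" using twin_rank_edge0_mod[OF c_less_N0] by (simp add: mod_eq_0_iff_dvd)
  then show ?thesis using True by (meson dvd_trans)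
next
  case False
  have "{a \<in> twins0 c. c < a} = {}"
  proof (rule ccontr)
    assume "{a \<in> twins0 c. c < a} \<noteq> {}"
    then obtain a where a: "a \<in> twins0 c" "c < a" by blast
    note t = twins0_same_target[OF c_less_N0 a(1)]
    have "odd (lap_index a)" using t(2) False m_pos by (simp add: lap_index_def)
    moreover have "a \<in> B" using same_target_B[OF a(2) t(1) t(3)[symmetric]] C_eq by simp
    ultimately show False using even_lap_index_iff[OF t(1)] a(2) by simp
  qed
  then have "card {a \<in> twins0 c. c < a} = 0" by (metis card.empty)
  then have "twin_rank (0, c) = twin_count - 1"
    using card_twins0_above[OF c_less_N0] card_twins_above(2)[of "(0, c)"] c_less_N0 mem_L n_pos
    by simp
  then have "Suc c mod twin_count = 0"
    using twin_rank_edge0_mod[OF c_less_N0] twin_count_pos by (simp add: mod_Suc)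
  then have "twin_count dvd Suc c" by (simp add: mod_eq_0_iff_dvd)
  then show ?thesis using False by (meson dvd_trans even_Suc)
qed

text \<open>The middle rank of an odd class is fixed both when \<open>\<pi>\<close> preserves and when it reverses
  the order of a class, so the labels of middle rank form a \<open>\<pi>\<close>-invariant set; it contains
  \<open>(0, twin_count div 2)\<close> but not \<open>(0, 0)\<close>, contradicting cyclicity unless the classes are
  singletons.\<close>

lemma twin_count_eq_1: "twin_count = 1"
proof (rule ccontr)
  assume "twin_count \<noteq> 1"
  define h where "h = twin_count div 2"
  have "twin_count = 2 * h + 1" using odd_two_times_div_two_succ[OF odd_twin_count] by (simp add: h_def)
  then have h: "1 \<le> h" "h < twin_count" "twin_count - 1 - h = h" using \<open>twin_count \<noteq> 1\<close> by auto
  let ?H = "{l \<in> L. twin_rank l = h}"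
  have step: "\<pi> l \<in> ?H" if l: "l \<in> ?H" for l
  proof -
    have lL: "l \<in> L" and rank: "twin_rank l = h" using l by simp_all
    have "twin_rank (\<pi> l) = h"
      using twins_pi_pres_or_rev[OF lL] twin_rank_pi_pres[OF lL] twin_rank_pi_rev[OF lL] rank h(3)
      by auto
    then show ?thesis using pi_in_L[OF lL] by simp
  qed
  have "card (twins0 0) \<le> card {..<N ! 0}" by (rule card_mono) (auto simp: twins0_def)
  then have hN: "h < N ! 0" using card_twins0[OF N0_pos] h(2) by simp
  then have h_in: "(0, h) \<in> ?H" using twin_rank_edge0_mod[OF hN] h(2) mem_L n_pos by simp
  obtain i where i: "(\<pi> ^^ i) (0, h) = (0, 0)" using pi_reach[OF _ L00, of "(0, h)"] h_in by blast
  have "(\<pi> ^^ i) (0, h) \<in> ?H" using funpow_closed[OF step h_in] .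
  then have "twin_rank (0, 0) = h" using i by simp
  then show False using twin_rank_edge0_mod[OF N0_pos] h(1) by simp
qed

lemma param_strict_mono:
  assumes "r < n" "s1 < s2" "s2 < N ! r"
  shows "param (r, s1) < param (r, s2)"
proof -
  have l: "(r, s1) \<in> L" "(r, s2) \<in> L" using assms mem_L by auto
  have "(r, s1) \<notin> twins (r, s2)"
  proof
    assume "(r, s1) \<in> twins (r, s2)"
    moreover obtain x where "twins (r, s2) = {x}"
      using card_twins[OF l(2)] twin_count_eq_1 by (metis card_1_singletonE)
    ultimately have "(r, s1) = (r, s2)" using self_in_twins[OF l(2)] by auto
    then show False using assms(2) by simp
  qed
  then show ?thesis using param_mono[OF assms(1) less_imp_le assms(3), OF assms(2)] l(1)
    by (auto simp: twins_def)
qed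

definition orbit :: "gpt set" where "orbit = point ` L"

lemma Pt_in_orbit_iff: "Pt r t \<in> orbit \<longleftrightarrow> r < n \<and> (\<exists>s < N ! r. t = param (r, s))"
proof
  assume "Pt r t \<in> orbit"
  then obtain l where l: "l \<in> L" "Pt r t = point l" by (auto simp: orbit_def)
  then show "r < n \<and> (\<exists>s < N ! r. t = param (r, s))"
    using point_eq_Pt[OF l(1)] mem_L by (cases l) auto
next
  assume "r < n \<and> (\<exists>s < N ! r. t = param (r, s))"
  then obtain s where s: "(r, s) \<in> L" "t = param (r, s)" using mem_L by blast
  then have "point (r, s) = Pt r t" using point_eq_Pt by simp
  then show "Pt r t \<in> orbit" unfolding orbit_def using s(1) by (metis image_eqI)
qed

lemma ptsE_orbit: "r < n \<Longrightarrow> ptsE orbit r = (\<lambda>s. param (r, s)) ` {..<N ! r}"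
  by (auto simp: ptsE_def Pt_in_orbit_iff)

lemma sorted_ptsE_orbit:
  "r < n \<Longrightarrow> sorted_list_of_set (ptsE orbit r) = map (\<lambda>s. param (r, s)) [0..<N ! r]"
  and card_ptsE_orbit: "r < n \<Longrightarrow> card (ptsE orbit r) = N ! r"
  using sorted_list_of_set_strict_mono_image[of "N ! r" "\<lambda>s. param (r, s)"] param_strict_mono ptsE_orbit
  by simp_all

lemma coord_orbit: "r < n \<Longrightarrow> s < N ! r \<Longrightarrow> coord orbit r s = param (r, s)"
  using sorted_ptsE_orbit by (simp add: coord_def)

lemma idx_orbit_point: "l \<in> L \<Longrightarrow> idx orbit (point l) = l"
proof -
  assume l: "l \<in> L"
  obtain r s where rs: "l = (r, s)" and r: "r < n" "s < N ! r" using l mem_L by (cases l) auto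
  have "card {t' \<in> ptsE orbit r. t' < coord orbit r s} = s"
    using card_less_sorted_nth[of "ptsE orbit r" s] ptsE_orbit[OF r(1)] card_ptsE_orbit[OF r(1)] r(2)
    by (simp add: coord_def)
  then show ?thesis using point_eq_Pt[OF l] rs coord_orbit[OF r] by simp
qed

lemma tmin_orbit:
  assumes r: "r < n"
  shows "tmin orbit r = param (r, 0)"
  unfolding tmin_def
proof (rule Min_eqI)
  show "finite (ptsE orbit r)" using ptsE_orbit[OF r] by simp
  show "param (r, 0) \<in> ptsE orbit r" using ptsE_orbit[OF r] N_pos[OF r] by simp
  fix y assume "y \<in> ptsE orbit r"
  then show "param (r, 0) \<le> y" using ptsE_orbit[OF r] param_mono[OF r] by auto
qed

lemma periodic_orbit_orbit: "periodic_orbit m n orbit"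
proof -
  obtain j where j: "(\<pi> ^^ j) (\<pi> (0, 0)) = (0, 0)" using pi_reach[OF pi_in_L[OF L00] L00] by blast
  then have "(\<pi> ^^ Suc j) (0, 0) = (0, 0)" by (simp only: funpow_Suc_right comp_apply)
  then have per: "(fmap m n ^^ Suc j) (point (0, 0)) = point (0, 0)"
    using funpow_fmap_point[OF L00, of "Suc j"] by simp
  have orb: "orbit = {(fmap m n ^^ i) (point (0, 0)) | i. True}"
  proof (intro equalityI subsetI)
    fix y assume "y \<in> orbit"
    then obtain l where l: "l \<in> L" "y = point l" by (auto simp: orbit_def)
    obtain i where "(\<pi> ^^ i) (0, 0) = l" using pi_reach[OF L00 l(1)] by blast
    then have "y = (fmap m n ^^ i) (point (0, 0))" using funpow_fmap_point[OF L00, of i] l by simp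
    then show "y \<in> {(fmap m n ^^ i) (point (0, 0)) | i. True}" by blast
  next
    fix y assume "y \<in> {(fmap m n ^^ i) (point (0, 0)) | i. True}"
    then show "y \<in> orbit" using funpow_fmap_point[OF L00] funpow_pi_in_L[OF L00] by (auto simp: orbit_def)
  qed
  have "point (0, 0) \<in> gamma n"
    using point_eq_Pt[OF L00] param_bounds[OF L00] param_less_1[OF L00] n_pos by (auto simp: gamma_def)
  then show ?thesis unfolding periodic_orbit_def using per orb by blast
qed

lemma star_orbit_orbit: "star_orbit m n orbit"
proof -
  have "orbit \<noteq> {Vtx}" using point_eq_Pt L00 by (auto simp: orbit_def)
  moreover have "\<forall>r<n. ptsE orbit r \<noteq> {}" using ptsE_orbit N_pos by auto
  moreover have "\<not> (fmap m n ` (orbit \<inter> {Pt 0 t | t. True}) \<subseteq> {Pt m t | t. True})"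
  proof
    assume sub: "fmap m n ` (orbit \<inter> {Pt 0 t | t. True}) \<subseteq> {Pt m t | t. True}"
    have "point (0, 0) \<in> orbit" unfolding orbit_def using L00 by (rule imageI)
    then have "point (0, 0) \<in> orbit \<inter> {Pt 0 t | t. True}" using point_eq_Pt[OF L00] by simp
    then have "fmap m n (point (0, 0)) \<in> {Pt m t | t. True}" using subsetD[OF sub imageI] by blast
    then have "point (\<pi> (0, 0)) \<in> {Pt m t | t. True}" unfolding fmap_point[OF L00] .
    then show False using point_eq_Pt[OF pi_in_L[OF L00]] pi_fst_00 k_less_m by auto
  qed
  moreover have "fmap m n (Pt r (tmin orbit r)) = Pt ((r + m) mod n) (tmin orbit ((r + m) mod n))"
    if r: "0 < r" "r < n" for r
  proof -
    have l: "(r, 0) \<in> L" using mem_L r N_pos by simp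
    have pi: "\<pi> (r, 0) = ((r + m) mod n, 0)"
      using pi_fst_shift[OF r N_pos[OF r(2)]] pi_snd_first[OF r] by (simp add: prod_eq_iff)
    have "fmap m n (Pt r (tmin orbit r)) = point (\<pi> (r, 0))"
      using fmap_point[OF l] point_eq_Pt[OF l] tmin_orbit r by simp
    then show ?thesis using point_eq_Pt[OF pi_in_L[OF l]] pi tmin_orbit n_pos by simp
  qed
  ultimately show ?thesis using periodic_orbit_orbit unfolding star_orbit_def by blast
qed

lemma star_cycle_orbit: "star_cycle m n orbit"
  using star_orbit_imp_star_cycle[OF star_orbit_orbit] .

lemma dataN_orbit: "dataN n orbit = N"
  by (rule nth_equalityI) (simp_all add: dataN_def length_N card_ptsE_orbit)

lemma dataPi_orbit: "dataPi m n orbit = \<pi>"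
proof
  fix l :: "nat \<times> nat"
  show "dataPi m n orbit l = \<pi> l"
  proof (cases "l \<in> L")
    case True
    then obtain r s where rs: "l = (r, s)" and r: "r < n" "s < N ! r" using mem_L by (cases l) auto
    have "lab orbit r s = point l" using lab_coord coord_orbit[OF r] point_eq_Pt[OF True] rs by simp
    then have "idx orbit (fmap m n (lab orbit r s)) = \<pi> l"
      using fmap_point[OF True] idx_orbit_point[OF pi_in_L[OF True]] by simp
    then show ?thesis using True rs by (simp add: dataPi_def dataN_orbit)
  next
    case False
    then show ?thesis using pi_notin_L by (cases l) (simp add: dataPi_def dataN_orbit)
  qed
qed

lemma Pt_param_in_orbit: "s < N ! 0 \<Longrightarrow> Pt 0 (param (0, s)) \<in> orbit"
  using Pt_in_orbit_iff n_pos by auto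

lemma tmin_orbit_target:
  "s < N ! 0 \<Longrightarrow> tmin orbit (lap_edge (lap_index s)) = param (fst (\<pi> (0, s)), 0)"
  using tmin_orbit pi_bounds[OF n_pos] lap_edge_lap_index by simp

lemma orbit_regular_point_type:
  assumes s: "s < N ! 0" and "s \<noteq> c"
  shows "(loc_rev m n orbit (param (0, s)) \<longleftrightarrow> s \<in> A) \<and>
    (loc_pres m n orbit (param (0, s)) \<longleftrightarrow> s \<in> B) \<and> loc_inj m n orbit (param (0, s))"
proof -
  interpret orbit: star_cycle m n orbit by (rule star_cycle_orbit)
  define j where "j = fst (\<pi> (0, s))"
  have j: "j < n" "snd (\<pi> (0, s)) < N ! j" using pi_bounds[OF n_pos s] by (simp_all add: j_def)
  have J: "lap_index s = lap_of m (param (0, s))" using lap_of_param[OF s] by simp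
  have image: "lap m (lap_index s) (param (0, s)) = param (j, snd (\<pi> (0, s)))"
    using lap_param_edge0[OF s] by (simp add: j_def)
  have "param (j, 0) < param (j, snd (\<pi> (0, s)))"
  proof (rule ccontr)
    assume "\<not> ?thesis"
    then have at: "param (j, snd (\<pi> (0, s))) = param (j, 0)"
      using param_mono[of j 0 "snd (\<pi> (0, s))"] j by simp
    then have "j = m"
      using orbit.fold_target_eq_m[OF Pt_param_in_orbit[OF s]] image tmin_orbit_target[OF s]
        lap_edge_lap_index[OF s] J
      by (simp add: j_def)
    then have pos: "0 < snd (\<pi> (0, s))" using pi_snd_pos_if_target_m[OF s \<open>s \<noteq> c\<close>] by (simp add: j_def)
    show False using at param_strict_mono[OF j(1) pos j(2)] by simp
  qed
  then have "tmin orbit (lap_edge (lap_index s)) < lap m (lap_index s) (param (0, s))"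
    using image tmin_orbit_target[OF s] by (simp add: j_def)
  note type = orbit.loc_type_regular[OF Pt_param_in_orbit[OF s] J this]
  show ?thesis
    using type even_lap_index_iff[OF s \<open>s \<noteq> c\<close>] point_cases[OF s] \<open>s \<noteq> c\<close>
      loc_pres_imp_loc_inj loc_rev_imp_loc_inj
    by (cases "even (lap_index s)") auto
qed

lemma orbit_fold_point_type:
  "\<not> loc_rev m n orbit (param (0, c)) \<and> \<not> loc_pres m n orbit (param (0, c)) \<and>
    \<not> loc_inj m n orbit (param (0, c))"
proof -
  interpret orbit: star_cycle m n orbit by (rule star_cycle_orbit)
  have "lap m (lap_index c) (param (0, c)) = tmin orbit (lap_edge (lap_index c))"
    using lap_param_edge0[OF c_less_N0] tmin_orbit_target[OF c_less_N0] pi_c by simp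
  moreover have "tmin orbit 0 < param (0, c)"
    using tmin_orbit[OF n_pos] param_strict_mono[OF n_pos _ c_less_N0] c_ne_0 by (simp add: gr0I)
  ultimately have "\<not> loc_inj m n orbit (param (0, c))"
    using orbit.fold_not_loc_inj[OF Pt_param_in_orbit[OF c_less_N0]] lap_of_param[OF c_less_N0]
    by simp
  then show ?thesis using loc_pres_imp_loc_inj loc_rev_imp_loc_inj by blast
qed

lemma orbit_point_type_iff:
  assumes s: "s < N ! 0"
  shows "loc_rev m n orbit (param (0, s)) \<longleftrightarrow> s \<in> A"
    "loc_pres m n orbit (param (0, s)) \<longleftrightarrow> s \<in> B"
    "\<not> loc_inj m n orbit (param (0, s)) \<longleftrightarrow> s \<in> C"
  using orbit_regular_point_type[OF s] orbit_fold_point_type point_cases[OF s] C_eq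
  by (cases "s = c"; auto)+

lemma dataABC_orbit: "dataABC m n orbit = (A, B, C)"
proof -
  have coord: "s < N ! 0 \<Longrightarrow> sorted_list_of_set (ptsE orbit 0) ! s = param (0, s)" for s
    using coord_orbit[OF n_pos] by (simp add: coord_def)
  have "A \<subseteq> {..<N ! 0}" "B \<subseteq> {..<N ! 0}" "C \<subseteq> {..<N ! 0}" using ABC_partition(1) by auto
  then show ?thesis
    using orbit_point_type_iff
    by (auto simp: dataABC_def Let_def card_ptsE_orbit[OF n_pos] coord cong: conj_cong)
qed

lemma orbit_realizes_data: "Pset m n k gB orbit \<and> dataP m n orbit = (N, \<pi>, (A, B, C))"
proof
  show "dataP m n orbit = (N, \<pi>, (A, B, C))"
    by (simp add: dataP_def dataN_orbit dataPi_orbit dataABC_orbit)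
  have "fmap m n (lab orbit 0 0) = point (\<pi> (0, 0))"
    using fmap_point[OF L00] lab_coord coord_orbit[OF n_pos N0_pos] point_eq_Pt[OF L00] by simp
  then have "fmap m n (lab orbit 0 0) = Pt k (param (\<pi> (0, 0)))"
    using point_eq_Pt[OF pi_in_L[OF L00]] pi_fst_00 by simp
  then show "Pset m n k gB orbit"
    unfolding Pset_def using star_orbit_orbit zero_in_gamma dataABC_orbit by auto
qed

end

theorem lemma2p6:
  fixes m n k :: nat and gB :: bool and N :: "nat list"
    and \<pi> :: "nat \<times> nat \<Rightarrow> nat \<times> nat" and A B C :: "nat set"
  assumes "0 < m" and "2 * m \<le> n" and "coprime m n"
    and "k < m" and "k = 0 \<longrightarrow> gB"
    and "inD n (N, \<pi>, (A, B, C))"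
  shows "(\<exists>P. Pset m n k gB P \<and> dataP m n P = (N, \<pi>, (A, B, C))) \<longleftrightarrow>
    ((\<forall>r. 0 < r \<and> r < n \<longrightarrow>
        (\<forall>s < N ! r. fst (\<pi> (r, s)) = (r + m) mod n) \<and>
        (\<forall>s1 s2. s1 < s2 \<and> s2 < N ! r \<longrightarrow> snd (\<pi> (r, s1)) < snd (\<pi> (r, s2))) \<and>
        snd (\<pi> (r, 0)) = 0) \<and>
     0 \<in> (if gB then B else A) \<and>
     fst (\<pi> (0, 0)) = k \<and>
     (\<forall>c\<in>C. \<pi> (0, c) = (m, 0)) \<and>
     (\<forall>s < N ! 0. k \<le> fst (\<pi> (0, s)) \<and> fst (\<pi> (0, s)) \<le> m) \<and>
     (\<forall>s1 s2. s1 \<le> s2 \<and> s2 < N ! 0 \<longrightarrow> fst (\<pi> (0, s1)) \<le> fst (\<pi> (0, s2))) \<and>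
     (\<forall>s1 s2. s1 < s2 \<and> s2 < N ! 0 \<and> fst (\<pi> (0, s1)) = fst (\<pi> (0, s2)) \<and> s1 \<in> B \<union> C
        \<longrightarrow> s2 \<in> B) \<and>
     (\<forall>s1 s2. s1 < s2 \<and> s2 < N ! 0 \<and> fst (\<pi> (0, s1)) = fst (\<pi> (0, s2)) \<and> s1 \<in> A \<and> s2 \<in> A
        \<longrightarrow> snd (\<pi> (0, s1)) > snd (\<pi> (0, s2))) \<and>
     (\<forall>s1 s2. s1 < s2 \<and> s2 < N ! 0 \<and> fst (\<pi> (0, s1)) = fst (\<pi> (0, s2)) \<and> s1 \<in> B \<and> s2 \<in> B
        \<longrightarrow> snd (\<pi> (0, s1)) < snd (\<pi> (0, s2))))"
proof -
  have params: "star_params m n" using assms(1-3) by unfold_locales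
  interpret star_params m n by (rule params)
  have card_C: "card C = 1" using assms(6) by (simp add: inD_def)
  have "(\<exists>P. Pset m n k gB P \<and> dataP m n P = (N, \<pi>, (A, B, C))) \<longleftrightarrow>
      star_data_conditions m n k gB N \<pi> A B C"
  proof
    assume "\<exists>P. Pset m n k gB P \<and> dataP m n P = (N, \<pi>, (A, B, C))"
    then obtain P where P: "Pset m n k gB P" "dataP m n P = (N, \<pi>, (A, B, C))" by blast
    have cycle: "star_cycle m n P" using P(1) star_orbit_imp_star_cycle by (simp add: Pset_def)
    interpret star_orbit_data m n P k gB N \<pi> A B C
      using star_orbit_data.intro[OF cycle star_orbit_data_axioms.intro[OF P card_C assms(4)]] .
    show "star_data_conditions m n k gB N \<pi> A B C" by (rule conditions)
  next
    assume conditions: "star_data_conditions m n k gB N \<pi> A B C"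
    obtain c where "C = {c}" using card_C by (rule card_1_singletonE)
    then interpret star_data m n k gB N \<pi> A B C c
      using star_data.intro[OF params star_data_axioms.intro[OF assms(6) conditions assms(4,5)]] by blast
    show "\<exists>P. Pset m n k gB P \<and> dataP m n P = (N, \<pi>, (A, B, C))" using orbit_realizes_data by blast
  qed
  then show ?thesis unfolding star_data_conditions_def .
qed

end
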